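(* For every $n\ge0$ and every $\sigma\in\mathfrak S_n$, with $\Phi$ and $\mathrm F_3$ the bijections of $\mathfrak S_n$ defined below, $$(\mathrm{fix},\mathrm{DEZ},\mathrm{exc})\,\sigma=(\mathrm{fix},\mathrm{DES},\mathrm{exc})\,\Phi(\sigma),\qquad (\mathrm{fix},\mathrm{dez},\mathrm{maz},\mathrm{exc})\,\sigma=(\mathrm{fix},\mathrm{des},\mathrm{maj},\mathrm{exc})\,\Phi(\sigma),$$ $$(\mathrm{fix},\mathrm{maz},\mathrm{exc})\,\sigma=(\mathrm{fix},\mathrm{maf},\mathrm{exc})\,\mathrm F_3(\sigma).$$
   Context: Words have nonnegative integer letters. For $w=x_1\cdots x_n$: $\mathrm{DES}\,w=\{i:1\le i\le n-1,\ x_i>x_{i+1}\}$, $\mathrm{des}\,w=\#\mathrm{DES}\,w$, $\mathrm{maj}\,w=\sum_{i\in\mathrm{DES}\,w}i$; $\mathrm{Zero}\,w=\{i:x_i=0\}$, $\mathrm{zero}\,w=\#\mathrm{Zero}\,w$; $\mathrm{Pos}\,w$ is the subword of positive letters; $\mathrm{mafz}\,w=\sum_{i\in\mathrm{Zero}\,w}i-\sum_{i=1}^{\mathrm{zero}\,w}i+\mathrm{maj}\,\mathrm{Pos}\,w$. Permutations are words $\sigma(1)\cdots\sigma(n)$, with $\mathrm{DES},\mathrm{des},\mathrm{maj}$ as for words; $\mathrm{fix}\,\sigma$ is the number of fixed points; $\mathrm{exc}\,\sigma=\#\{i:\sigma(i)>i\}$. $\mathrm{ZDer}$: for $\sigma\in\mathfrak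 S_n$ let $j_1<\cdots<j_m$ be its non-fixed points and $\mathrm{red}$ the increasing bijection of $\{j_1,\dots,j_m\}$ onto $\{1,\dots,m\}$; $\mathrm{ZDer}(\sigma)=x_1\cdots x_n$ with $x_i=0$ if $\sigma(i)=i$ and $x_i=\mathrm{red}(\sigma(i))$ otherwise; it is a bijection of $\mathfrak S_n$ onto the set of words $w$ of length $n$ whose positive-letter subword is a derangement (permutation $y_1\cdots y_m$ of $1..m$ with $y_i\ne i$). $\mathrm{DEZ}\,\sigma=\mathrm{DES}\,\mathrm{ZDer}(\sigma)$, $\mathrm{dez}\,\sigma=\#\mathrm{DEZ}\,\sigma$, $\mathrm{maz}\,\sigma=\mathrm{maj}\,\mathrm{ZDer}(\sigma)$, $\mathrm{maf}\,\sigma=\mathrm{mafz}\,\mathrm{ZDer}(\sigma)$. $\Phi(\sigma)=\mathrm{ZDer}^{-1}({\bf\Phi}(\mathrm{ZDer}\,\sigma))$ and $\mathrm F_3(\sigma)=\mathrm{ZDer}^{-1}({\bf F}_3(\mathrm{ZDer}\,\sigma))$, where: ${\bf\Phi}$: for $w=x_1\cdots x_n$ with $n-m$ zeros and derangement positive subword, and a position $k$ with $x_k>0$, $\mathrm{red}(k)$ is the number of positive letters among $x_1,\dots,x_k$; $x_k$ is excedent if $x_k>\mathrm{red}(k)$, subexcedent if $x_k<\mathrm{red}(k)$; non-subexcedent means $0$ or excedent; $x_0=x_{n+1}=+\infty$ count as non-subexcedent. For $1\le l\le n$: if $l>n-m$, $\phi_l(w)=w$; otherwise let $j$ be the position of the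 $l$-th zero from the left. (a) $x_{j-1},x_{j+1}$ both non-subexcedent: $\phi_l(w)=w$. (b) $x_{j-1}$ non-subexcedent and $x_{j+1}$ subexcedent, or both subexcedent with $x_{j-1}>x_{j+1}$: with $k$ the greatest integer $\ge j+1$ such that $x_{j+1}<\cdots<x_k<\mathrm{red}(k)$, move the zero at position $j$ to just after $x_k$. (c) $x_{j-1}$ subexcedent and $x_{j+1}$ non-subexcedent, or both subexcedent with $x_{j-1}<x_{j+1}$: with $i$ the smallest integer $\le j-1$ such that $\mathrm{red}(i)>x_i>\cdots>x_{j-1}$, move the zero at position $j$ to just before $x_i$. ${\bf\Phi}=\phi_1\circ\cdots\circ\phi_n$. ${\bf F}_3$, by induction on length $n$: if $n\le1$ or all letters except the last are $0$, ${\bf F}_3(w)=w$. Otherwise write $w=w'a0^rb$ with $a\ge1$ the rightmost positive letter among the first $n-1$ letters, $r\ge0$, $b$ the last letter. (1) $a\le b$: ${\bf F}_3(w)={\bf F}_3(w'a0^r)b$. (2) $a>b$, $r\ge1$: writing ${\bf F}_3(w'a0^r)=w''c$ ($c$ a letter), ${\bf F}_3(w)=0w''b$. (3) $a>b$, $r=0$: writing ${\bf F}_3(w'a)=0^{m_1}x_1v_1\cdots0^{m_k}x_kv_k$ ($m_1\ge0$, $m_2,\dots,m_k\ge1$, $x_i$ positive letters, $v_i$ possibly empty words of positive letters), ${\bf F}_3(w)=x_10^{m_1}v_1\cdots x_k0^{m_k}v_k\,b$. *)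

theory Defs
  imports Main
begin

text \<open>Words are lists of natural numbers; positions are 1-based, so the letter
  x_i of w is w ! (i - 1).\<close>

definition DES :: "nat list \<Rightarrow> nat set" where
  "DES w = {i. 1 \<le> i \<and> i \<le> length w - 1 \<and> w ! (i - 1) > w ! i}"

definition des :: "nat list \<Rightarrow> nat" where
  "des w = card (DES w)"

definition maj :: "nat list \<Rightarrow> nat" where
  "maj w = \<Sum>(DES w)"

definition Zero_pos :: "nat list \<Rightarrow> nat set" where
  "Zero_pos w = {i. 1 \<le> i \<and> i \<le> length w \<and> w ! (i - 1) = 0}"

definition zero_cnt :: "nat list \<Rightarrow> nat" where
  "zero_cnt w = card (Zero_pos w)"

definition Pos :: "nat list \<Rightarrow> nat list" where
  "Pos w = filter (\<lambda>x. 0 < x) w"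

definition mafz :: "nat list \<Rightarrow> int" where
  "mafz w = int (\<Sum>(Zero_pos w)) - int (\<Sum>{1..zero_cnt w}) + int (maj (Pos w))"

definition perms :: "nat \<Rightarrow> nat list set" where
  "perms n = {s. length s = n \<and> distinct s \<and> set s = {1..n}}"

definition fixp :: "nat list \<Rightarrow> nat" where
  "fixp s = card {i. 1 \<le> i \<and> i \<le> length s \<and> s ! (i - 1) = i}"

definition exc :: "nat list \<Rightarrow> nat" where
  "exc s = card {i. 1 \<le> i \<and> i \<le> length s \<and> s ! (i - 1) > i}"

definition ZDer :: "nat list \<Rightarrow> nat list" where
  "ZDer s = (let NF = {i. 1 \<le> i \<and> i \<le> length s \<and> s ! (i - 1) \<noteq> i};
                 red = (\<lambda>j. card {k \<in> NF. k \<le> j})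
             in map (\<lambda>i. if s ! (i - 1) = i then 0 else red (s ! (i - 1))) [1..<length s + 1])"

definition DEZ :: "nat list \<Rightarrow> nat set" where
  "DEZ s = DES (ZDer s)"

definition dez :: "nat list \<Rightarrow> nat" where
  "dez s = card (DEZ s)"

definition maz :: "nat list \<Rightarrow> nat" where
  "maz s = maj (ZDer s)"

definition maf :: "nat list \<Rightarrow> int" where
  "maf s = mafz (ZDer s)"

definition ZDer_inv :: "nat list \<Rightarrow> nat list" where
  "ZDer_inv w = inv_into (perms (length w)) ZDer w"

definition redw :: "nat list \<Rightarrow> nat \<Rightarrow> nat" where
  "redw w k = length (filter (\<lambda>x. 0 < x) (take k w))"

text \<open>subexcedent position (positions 0 and n+1 carry +infinity: never subexcedent)\<close>
definition subexc :: "nat list \<Rightarrow> nat \<Rightarrow> bool" where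
  "subexc w k = (1 \<le> k \<and> k \<le> length w \<and> 0 < w ! (k - 1) \<and> w ! (k - 1) < redw w k)"

definition zeropos :: "nat list \<Rightarrow> nat list" where
  "zeropos w = filter (\<lambda>i. w ! (i - 1) = 0) [1..<length w + 1]"

definition phi_l :: "nat \<Rightarrow> nat list \<Rightarrow> nat list" where
  "phi_l l w =
    (if l < 1 \<or> l > length (zeropos w) then w
     else let j = zeropos w ! (l - 1);
              x = (\<lambda>t. w ! (t - 1)) in
       if (\<not> subexc w (j - 1) \<and> subexc w (j + 1)) \<or>
          (subexc w (j - 1) \<and> subexc w (j + 1) \<and> x (j - 1) > x (j + 1)) then
         (let k = GREATEST k. j + 1 \<le> k \<and> k \<le> length w \<and>
                     (\<forall>t. j + 1 \<le> t \<and> t < k \<longrightarrow> x t < x (t + 1)) \<and> x k < redw w k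
          in take (j - 1) w @ drop j (take k w) @ [0] @ drop k w)
       else if (subexc w (j - 1) \<and> \<not> subexc w (j + 1)) \<or>
          (subexc w (j - 1) \<and> subexc w (j + 1) \<and> x (j - 1) < x (j + 1)) then
         (let i = LEAST i. 1 \<le> i \<and> i \<le> j - 1 \<and> redw w i > x i \<and>
                     (\<forall>t. i \<le> t \<and> t < j - 1 \<longrightarrow> x t > x (t + 1))
          in take (i - 1) w @ [0] @ drop (i - 1) (take (j - 1) w) @ drop j w)
       else w)"

definition PhiW :: "nat list \<Rightarrow> nat list" where
  "PhiW w = foldr phi_l [1..<length w + 1] w"

definition Phi :: "nat list \<Rightarrow> nat list" where
  "Phi s = ZDer_inv (PhiW (ZDer s))"

text \<open>Rewrites 0^m1 x1 v1 ... 0^mk xk vk into x1 0^m1 v1 ... xk 0^mk vk.\<close>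
function swapblocks :: "nat list \<Rightarrow> nat list" where
  "swapblocks l =
    (let z = takeWhile (\<lambda>y. y = 0) l; rest = dropWhile (\<lambda>y. y = 0) l in
     if rest = [] then z
     else hd rest # z @ takeWhile (\<lambda>y. 0 < y) (tl rest)
            @ swapblocks (dropWhile (\<lambda>y. 0 < y) (tl rest)))"
  by pat_completeness auto
termination
proof (relation "measure length")
  fix l :: "nat list" and z rest
  assume "z = takeWhile (\<lambda>y. y = 0) l" "rest = dropWhile (\<lambda>y. y = 0) l" "rest \<noteq> []"
  then show "(dropWhile (\<lambda>y. 0 < y) (tl rest), l) \<in> measure length"
    using length_dropWhile_le[of "\<lambda>y. 0 < y" "tl rest"] length_dropWhile_le[of "\<lambda>y. y = 0" l]
  proof -
    have "length rest \<ge> 1" using \<open>rest \<noteq> []\<close> by (cases rest) auto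
    moreover have "length rest \<le> length l"
      using \<open>rest = _\<close> length_dropWhile_le by metis
    moreover have "length (dropWhile (\<lambda>y. 0 < y) (tl rest)) \<le> length rest - 1"
      using length_dropWhile_le[of "\<lambda>y. 0 < y" "tl rest"] by simp
    ultimately show ?thesis by simp
  qed
qed auto

function F3W :: "nat list \<Rightarrow> nat list" where
  "F3W w =
    (if length w \<le> 1 \<or> (\<forall>y\<in>set (butlast w). y = 0) then w
     else let u = butlast w; b = last w;
              a = last (filter (\<lambda>y. 0 < y) u);
              r = length (takeWhile (\<lambda>y. y = 0) (rev u)) in
       if a \<le> b then F3W u @ [b]
       else if 1 \<le> r then 0 # butlast (F3W u) @ [b]
       else swapblocks (F3W u) @ [b])"
  by pat_completeness auto
termination
  by (relation "measure length") auto

definition F3 :: "nat list \<Rightarrow> nat list" where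
  "F3 s = ZDer_inv (F3W (ZDer s))"

end

theory Submission
  imports Defs
begin

text \<open>
  \<open>ZDer\<close> identifies permutations with words whose positive letters form a derangement: fixed
  points become zeros, and the excedances are read off the positive subword. Hence a bijection of
  such words that keeps the length and the positive subword keeps \<open>fix\<close> and \<open>exc\<close>.

  For \<open>\<Phi>\<close>, annotate each letter by its rank among the positive letters or among the zeros, and
  call descents of level \<open>l\<close> the descents obtained when the first \<open>l\<close> zeros are read as the letter
  \<open>0\<close> and the others as fixed points. Level \<open>0\<close> of \<open>ZDer \<sigma>\<close> gives \<open>DES \<sigma>\<close>, level \<open>n\<close> of a word
  \<open>w\<close> gives \<open>DES w\<close>. Each \<open>\<phi>\<^sub>l\<close> moves the \<open>l\<close>-th zero across a monotone run of positive letters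
  and turns the descents of level \<open>l\<close> into those of level \<open>l - 1\<close>, so \<open>\<phi>\<^sub>1 \<circ> \<dots> \<circ> \<phi>\<^sub>n\<close> carries
  \<open>DEZ \<sigma>\<close> to \<open>DES (\<Phi> \<sigma>)\<close>.

  For \<open>F\<^sub>3\<close>, \<open>mafz\<close> is the number of pairs (positive letter, later zero) plus \<open>maj \<circ> Pos\<close>, and an
  induction along the three cases of the definition shows that this number for \<open>F\<^sub>3 w\<close> is
  \<open>maj w - maj (Pos w)\<close>.

  All maps are injective on a finite set of words, hence bijective.
\<close>

section \<open>Annotated words and descents of level \<open>l\<close>\<close>

definition num_pos :: "nat list \<Rightarrow> nat" where
  "num_pos w = length (Pos w)"

definition num_zeros :: "nat list \<Rightarrow> nat" where
  "num_zeros w = length (filter (\<lambda>x. x = 0) w)"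

lemma Pos_simps [simp]:
  "Pos [] = []" "Pos (x # w) = (if 0 < x then x # Pos w else Pos w)" "Pos (v @ w) = Pos v @ Pos w"
  by (auto simp: Pos_def)

lemma num_pos_simps [simp]:
  "num_pos [] = 0" "num_pos (x # w) = (if 0 < x then Suc (num_pos w) else num_pos w)"
  "num_pos (v @ w) = num_pos v + num_pos w"
  by (auto simp: num_pos_def)

lemma num_zeros_simps [simp]:
  "num_zeros [] = 0" "num_zeros (x # w) = (if x = 0 then Suc (num_zeros w) else num_zeros w)"
  "num_zeros (v @ w) = num_zeros v + num_zeros w"
  by (auto simp: num_zeros_def)

lemma num_pos_add_num_zeros: "num_pos w + num_zeros w = length w"
  by (induction w) auto

lemma all_zero_counts:
  "\<forall>y\<in>set Z. y = 0 \<Longrightarrow> num_zeros Z = length Z \<and> num_pos Z = 0 \<and> Pos Z = []"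
  by (induction Z) auto

lemma all_pos_counts:
  "\<forall>y\<in>set P. 0 < y \<Longrightarrow> num_zeros P = 0 \<and> num_pos P = length P \<and> Pos P = P"
  by (induction P) auto

lemma Pos_eq_Nil_iff: "Pos u = [] \<longleftrightarrow> (\<forall>y\<in>set u. y = 0)"
  by (induction u) auto

lemma Pos_neq_Nil_iff: "Pos u \<noteq> [] \<longleftrightarrow> (\<exists>y\<in>set u. 0 < y)"
  by (induction u) auto

lemma num_zeros_eq_if_Pos_eq:
  "length v = length w \<Longrightarrow> Pos v = Pos w \<Longrightarrow> num_zeros v = num_zeros w"
  using num_pos_add_num_zeros[of v] num_pos_add_num_zeros[of w] by (simp add: num_pos_def)

text \<open>Each letter is paired with its rank among the positive letters, resp. among the zeros,
  counted from the offsets \<open>p\<close> and \<open>z\<close>; for a positive letter this is the paper's \<open>red(k)\<close>.\<close>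

fun annot_from :: "nat \<Rightarrow> nat \<Rightarrow> nat list \<Rightarrow> (nat \<times> nat) list" where
  "annot_from p z [] = []"
| "annot_from p z (x # xs) = (if 0 < x then (x, Suc p) # annot_from (Suc p) z xs
                               else (0, Suc z) # annot_from p (Suc z) xs)"

definition annot :: "nat list \<Rightarrow> (nat \<times> nat) list" where
  "annot w = annot_from 0 0 w"

lemma length_annot_from [simp]: "length (annot_from p z w) = length w"
  by (induction w arbitrary: p z) auto

lemma map_fst_annot_from [simp]: "map fst (annot_from p z w) = w"
  by (induction w arbitrary: p z) auto

lemma annot_from_eq_Nil_iff [simp]: "annot_from p z w = [] \<longleftrightarrow> w = []"
  by (cases w) auto

lemma annot_from_append:
  "annot_from p z (v @ w) = annot_from p z v @ annot_from (p + num_pos v) (z + num_zeros v) w"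
  by (induction v arbitrary: p z) auto

lemma annot_from_all_pos: "\<forall>x\<in>set w. 0 < x \<Longrightarrow> annot_from p z w = annot_from p z' w"
  by (induction w arbitrary: p) auto

lemma nth_annot_from:
  "i < length w \<Longrightarrow> annot_from p z w ! i =
     (w ! i, if 0 < w ! i then p + num_pos (take (Suc i) w) else z + num_zeros (take (Suc i) w))"
proof (induction w arbitrary: p z i)
  case (Cons x xs)
  then show ?case by (cases i) auto
qed simp

lemma annot_from_zero_bounds:
  "e \<in> set (annot_from p z w) \<Longrightarrow> fst e = 0 \<Longrightarrow> z < snd e \<and> snd e \<le> z + num_zeros w"
  by (induction w arbitrary: p z) (auto split: if_splits, fastforce+)

lemma filter_pos_annot_from:
  "filter (\<lambda>e. 0 < fst e) (annot_from p z w) = zip (Pos w) [Suc p..<Suc p + num_pos w]"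
proof (induction w arbitrary: p z)
  case (Cons x xs)
  then show ?case by (auto simp: upt_conv_Cons)
qed simp

lemma hd_annot_from:
  "w \<noteq> [] \<Longrightarrow> hd (annot_from p z w) = (hd w, if 0 < hd w then Suc p else Suc z)"
  by (cases w) auto

lemma last_annot_from:
  "w \<noteq> [] \<Longrightarrow> last (annot_from p z w) =
     (last w, if 0 < last w then p + num_pos w else z + num_zeros w)"
proof (induction w rule: rev_induct)
  case (snoc x xs)
  then show ?case by (auto simp: annot_from_append)
qed simp

definition adjacent :: "('a \<Rightarrow> 'a \<Rightarrow> bool) \<Rightarrow> 'a list \<Rightarrow> bool list" where
  "adjacent f L = map (\<lambda>(a, b). f a b) (zip L (tl L))"

lemma adjacent_simps [simp]:
  "adjacent f [] = []" "adjacent f [x] = []" "adjacent f (x # y # L) = f x y # adjacent f (y # L)"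
  by (auto simp: adjacent_def)

lemma length_adjacent [simp]: "length (adjacent f L) = length L - 1"
  by (simp add: adjacent_def)

lemma nth_adjacent: "Suc i < length L \<Longrightarrow> adjacent f L ! i = f (L ! i) (L ! Suc i)"
  by (simp add: adjacent_def nth_tl)

lemma adjacent_Cons: "L \<noteq> [] \<Longrightarrow> adjacent f (x # L) = f x (hd L) # adjacent f L"
  by (cases L) auto

lemma adjacent_append:
  "adjacent f (L1 @ L2) =
     adjacent f L1 @ (if L1 = [] \<or> L2 = [] then [] else [f (last L1) (hd L2)]) @ adjacent f L2"
proof (induction L1)
  case (Cons x L1)
  then show ?case by (cases "L1 = []"; cases L2; cases L1) auto
qed simp

lemma adjacent_append_Cons:
  "adjacent f (L1 @ e # L2) = adjacent f L1 @ (if L1 = [] then [] else [f (last L1) e]) @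
     (if L2 = [] then [] else [f e (hd L2)]) @ adjacent f L2"
  by (simp add: adjacent_append adjacent_Cons)

lemma adjacent_map: "adjacent f (map h L) = adjacent (\<lambda>a b. f (h a) (h b)) L"
  by (simp add: adjacent_def zip_map1 zip_map2 map_tl[symmetric] case_prod_unfold)

lemma adjacent_cong:
  "(\<And>a b. a \<in> set L \<Longrightarrow> b \<in> set L \<Longrightarrow> f a b = g a b) \<Longrightarrow> adjacent f L = adjacent g L"
  by (induction L rule: induct_list012) auto

lemma adjacent_const:
  "(\<And>i. Suc i < length L \<Longrightarrow> f (L ! i) (L ! Suc i) = c) \<Longrightarrow>
     adjacent f L = replicate (length L - 1) c"
  by (rule nth_equalityI) (auto simp: nth_adjacent)

definition true_positions :: "bool list \<Rightarrow> nat set" where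
  "true_positions bs = {i. 1 \<le> i \<and> i \<le> length bs \<and> bs ! (i - 1)}"

lemma DES_eq_true_positions: "DES w = true_positions (adjacent (\<lambda>x y. y < x) w)"
  unfolding DES_def true_positions_def by (auto simp: nth_adjacent)

text \<open>Descents of a word when its first \<open>l\<close> zeros are read as the letter \<open>0\<close> and the other
  zeros as fixed points of the permutation \<open>ZDer\<^sup>-\<^sup>1 w\<close>: a zero at zero-rank \<open>c > l\<close> lies above a
  following positive letter exactly when that letter is subexcedent, and below it otherwise;
  symmetrically a positive letter lies above a following such zero exactly when it is excedent.\<close>

fun desc_at :: "nat \<Rightarrow> nat \<times> nat \<Rightarrow> nat \<times> nat \<Rightarrow> bool" where
  "desc_at l (x, c) (y, d) =
     (if 0 < x \<and> 0 < y then y < x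
      else if 0 < x then (l < d \<longrightarrow> c < x)
      else if 0 < y then (l < c \<and> y < d)
      else False)"

definition DES_level :: "nat \<Rightarrow> nat list \<Rightarrow> nat set" where
  "DES_level l w = true_positions (adjacent (desc_at l) (annot w))"

lemma DES_level_all_zeros: "num_zeros w \<le> l \<Longrightarrow> DES_level l w = DES w"
proof -
  assume l: "num_zeros w \<le> l"
  have "adjacent (desc_at l) (annot w) = adjacent (\<lambda>a b. fst b < fst a) (annot w)"
  proof (rule adjacent_cong)
    fix a b assume "a \<in> set (annot w)" "b \<in> set (annot w)"
    then have "fst a = 0 \<Longrightarrow> snd a \<le> l" "fst b = 0 \<Longrightarrow> snd b \<le> l"
      using annot_from_zero_bounds[of a 0 0 w] annot_from_zero_bounds[of b 0 0 w] l
      by (auto simp: annot_def)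
    then show "desc_at l a b = (fst b < fst a)"
      by (cases a; cases b) auto
  qed
  also have "\<dots> = adjacent (\<lambda>x y. y < x) (map fst (annot w))"
    by (simp add: adjacent_map)
  finally show ?thesis
    by (simp add: DES_level_def DES_eq_true_positions annot_def)
qed

lemma adjacent_desc_at_shift:
  "1 \<le> l \<Longrightarrow> (\<forall>e\<in>set L. fst e = 0 \<longrightarrow> snd e \<noteq> l) \<Longrightarrow>
     adjacent (desc_at l) L = adjacent (desc_at (l - 1)) L"
proof (rule adjacent_cong)
  fix a b assume l: "1 \<le> l" and h: "\<forall>e\<in>set L. fst e = 0 \<longrightarrow> snd e \<noteq> l"
    and "a \<in> set L" "b \<in> set L"
  then have "fst a = 0 \<longrightarrow> snd a \<noteq> l" "fst b = 0 \<longrightarrow> snd b \<noteq> l" by auto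
  with l show "desc_at l a b = desc_at (l - 1) a b"
    by (cases a; cases b) auto
qed

lemma DES_level_shift: "1 \<le> l \<Longrightarrow> num_zeros w < l \<Longrightarrow> DES_level l w = DES_level (l - 1) w"
  unfolding DES_level_def annot_def
  by (subst adjacent_desc_at_shift) (auto dest: annot_from_zero_bounds)

section \<open>Words with a derangement as positive subword\<close>

definition der_word :: "nat list \<Rightarrow> bool" where
  "der_word w \<longleftrightarrow> (\<forall>e\<in>set (annot w). 0 < fst e \<longrightarrow> fst e \<noteq> snd e)"

lemma der_word_iff_Pos: "der_word w \<longleftrightarrow> (\<forall>i<num_pos w. Pos w ! i \<noteq> Suc i)"
proof -
  have "der_word w \<longleftrightarrow> (\<forall>e\<in>set (filter (\<lambda>e. 0 < fst e) (annot w)). fst e \<noteq> snd e)"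
    unfolding der_word_def set_filter by blast
  also have "\<dots> \<longleftrightarrow> (\<forall>e\<in>set (zip (Pos w) [1..<Suc (num_pos w)]). fst e \<noteq> snd e)"
    by (simp add: annot_def filter_pos_annot_from)
  also have "set (zip (Pos w) [1..<Suc (num_pos w)]) = (\<lambda>i. (Pos w ! i, Suc i)) ` {..<num_pos w}"
    unfolding set_zip by (force simp: num_pos_def nth_upt simp del: upt_Suc)
  finally show ?thesis by auto
qed

lemma der_word_append_Cons: "der_word (A @ x # D) \<Longrightarrow> 0 < x \<Longrightarrow> x \<noteq> Suc (num_pos A)"
proof -
  assume d: "der_word (A @ x # D)" and x: "0 < x"
  have "(x, Suc (num_pos A)) \<in> set (annot (A @ x # D))"
    using x by (simp add: annot_def annot_from_append)
  then show ?thesis using d x unfolding der_word_def by fastforce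
qed

lemma der_word_prefix: "der_word (A @ D) \<Longrightarrow> der_word A"
  unfolding der_word_def annot_def annot_from_append by simp

lemma der_word_last: "der_word A \<Longrightarrow> A \<noteq> [] \<Longrightarrow> 0 < last A \<Longrightarrow> last A \<noteq> num_pos A"
proof -
  assume "der_word A" "A \<noteq> []" "0 < last A"
  moreover have "A = butlast A @ [last A]" using \<open>A \<noteq> []\<close> by simp
  ultimately show ?thesis
    using der_word_append_Cons[of "butlast A" "last A" "[]"] num_pos_simps(3)[of "butlast A" "[last A]"]
    by auto
qed

definition zder_words :: "nat \<Rightarrow> nat list set" where
  "zder_words n =
     {w. length w = n \<and> distinct (Pos w) \<and> set (Pos w) = {1..num_pos w} \<and> der_word w}"

lemma zder_wordsD:
  assumes "w \<in> zder_words n"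
  shows "length w = n" "distinct (Pos w)" "set (Pos w) = {1..num_pos w}" "der_word w"
  using assms by (auto simp: zder_words_def)

lemma zder_words_Pos_cong:
  "v \<in> zder_words n \<Longrightarrow> length w = length v \<Longrightarrow> Pos w = Pos v \<Longrightarrow> w \<in> zder_words n"
  by (simp add: zder_words_def der_word_iff_Pos num_pos_def)

lemma finite_zder_words: "finite (zder_words n)"
proof (rule finite_subset)
  show "zder_words n \<subseteq> {w. set w \<subseteq> {0..n} \<and> length w = n}"
  proof
    fix w assume w: "w \<in> zder_words n"
    have "x \<le> n" if x: "x \<in> set w" for x
    proof (cases "x = 0")
      case False
      then have "x \<in> set (Pos w)" using x by (simp add: Pos_def)
      then have "x \<le> num_pos w" using zder_wordsD(3)[OF w] by auto
      also have "num_pos w \<le> n"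
        using zder_wordsD(1)[OF w] num_pos_add_num_zeros[of w] by simp
      finally show ?thesis .
    qed simp
    then show "w \<in> {w. set w \<subseteq> {0..n} \<and> length w = n}"
      using zder_wordsD(1)[OF w] by auto
  qed
  show "finite {w. set w \<subseteq> {0..n} \<and> length w = n}"
    by (rule finite_lists_length_eq) simp
qed

lemma bij_betw_zder_words:
  "(\<And>w. w \<in> zder_words n \<Longrightarrow> f w \<in> zder_words n) \<Longrightarrow> inj_on f (zder_words n) \<Longrightarrow>
     bij_betw f (zder_words n) (zder_words n)"
  unfolding bij_betw_def using endo_inj_surj[OF finite_zder_words] by blast

section \<open>The moves \<open>\<phi>\<^sub>l\<close>\<close>

lemma zeropos_Cons:
  "zeropos (x # w) = (if x = 0 then 1 # map Suc (zeropos w) else map Suc (zeropos w))"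
proof -
  have alt: "zeropos v = map Suc (filter (\<lambda>i. v ! i = 0) [0..<length v])" for v
  proof -
    have "[1..<length v + 1] = map Suc [0..<length v]" by (simp add: map_Suc_upt)
    then show ?thesis by (simp add: zeropos_def filter_map o_def)
  qed
  have "[0..<length (x # w)] = 0 # map Suc [0..<length w]"
    by (simp add: upt_conv_Cons map_Suc_upt del: upt_Suc)
  then show ?thesis by (simp add: alt filter_map o_def)
qed

lemma length_zeropos: "length (zeropos w) = num_zeros w"
  by (induction w) (auto simp: zeropos_Cons, simp add: zeropos_def)

lemma zeropos_nth_num_zeros: "zeropos (A @ 0 # D) ! num_zeros A = Suc (length A)"
proof (induction A)
  case Nil then show ?case by (simp add: zeropos_Cons)
next
  case (Cons x A)
  have "num_zeros A < length (zeropos (A @ 0 # D))" by (simp add: length_zeropos)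
  then show ?case using Cons by (auto simp: zeropos_Cons)
qed

lemma split_at_zero:
  "1 \<le> l \<Longrightarrow> l \<le> num_zeros w \<Longrightarrow> \<exists>A D. w = A @ 0 # D \<and> num_zeros A = l - 1"
proof (induction w arbitrary: l)
  case (Cons x w)
  show ?case
  proof (cases "x = 0 \<and> l = 1")
    case True
    then show ?thesis by (intro exI[of _ "[]"] exI[of _ w]) auto
  next
    case False
    define l' where "l' = (if x = 0 then l - 1 else l)"
    have "1 \<le> l'" "l' \<le> num_zeros w" using False Cons.prems by (auto simp: l'_def)
    then obtain A D where "w = A @ 0 # D" "num_zeros A = l' - 1" using Cons.IH by blast
    then show ?thesis using False Cons.prems
      by (intro exI[of _ "x # A"] exI[of _ D]) (auto simp: l'_def)
  qed
qed simp

lemma split_at_zero_unique: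
  "A1 @ 0 # C1 = A2 @ 0 # C2 \<Longrightarrow> num_zeros A1 = num_zeros A2 \<Longrightarrow> A1 = A2 \<and> C1 = C2"
proof (induction A1 arbitrary: A2)
  case Nil
  then show ?case by (cases A2) auto
next
  case (Cons x A1)
  then show ?case by (cases A2) (auto split: if_splits)
qed

lemma redw_eq: "redw w k = num_pos (take k w)"
  by (simp add: redw_def num_pos_def Pos_def)

definition left_subexc :: "nat list \<Rightarrow> bool" where
  "left_subexc A \<longleftrightarrow> A \<noteq> [] \<and> 0 < last A \<and> last A < num_pos A"

definition right_subexc :: "nat list \<Rightarrow> nat list \<Rightarrow> bool" where
  "right_subexc A D \<longleftrightarrow> D \<noteq> [] \<and> 0 < hd D \<and> hd D < Suc (num_pos A)"

lemma subexc_before_zero: "subexc (A @ 0 # D) (length A) = left_subexc A"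
proof (cases "A = []")
  case False
  then have "(A @ 0 # D) ! (length A - Suc 0) = last A" "1 \<le> length A"
    by (auto simp: nth_append last_conv_nth Suc_le_eq)
  then show ?thesis using False by (simp add: left_subexc_def subexc_def redw_eq)
qed (simp add: left_subexc_def subexc_def)

lemma subexc_after_zero: "subexc (A @ 0 # D) (Suc (Suc (length A))) = right_subexc A D"
  by (cases D) (auto simp: right_subexc_def subexc_def redw_eq nth_append)

lemma not_left_subexc:
  assumes "der_word A" and "\<not> left_subexc A"
  shows "A = [] \<or> last A = 0 \<or> num_pos A < last A"
proof (cases "A = [] \<or> last A = 0")
  case False
  then have "last A \<noteq> num_pos A" using der_word_last[OF assms(1)] by simp
  then show ?thesis using False assms(2) unfolding left_subexc_def by simp
qed blast

lemma not_right_subexc: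
  "der_word (A @ 0 # D) \<Longrightarrow> \<not> right_subexc A D \<Longrightarrow> D = [] \<or> hd D = 0 \<or> Suc (num_pos A) < hd D"
  using der_word_append_Cons[of "A @ [0]" "hd D" "tl D"]
  by (cases D) (auto simp: right_subexc_def)

definition rising_run :: "nat list \<Rightarrow> nat \<Rightarrow> nat \<Rightarrow> bool" where
  "rising_run w j k \<longleftrightarrow> j + 1 \<le> k \<and> k \<le> length w \<and>
     (\<forall>t. j + 1 \<le> t \<and> t < k \<longrightarrow> w ! (t - 1) < w ! t) \<and> w ! (k - 1) < redw w k"

definition falling_run :: "nat list \<Rightarrow> nat \<Rightarrow> nat \<Rightarrow> bool" where
  "falling_run w i j \<longleftrightarrow> 1 \<le> i \<and> i \<le> j \<and> w ! (i - 1) < redw w i \<and>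
     (\<forall>t. i \<le> t \<and> t < j \<longrightarrow> w ! t < w ! (t - 1))"

lemma rising_run_iff:
  assumes "B \<noteq> []"
  shows "rising_run (A @ 0 # B @ C) (Suc (length A)) (Suc (length A) + length B) \<longleftrightarrow>
    sorted_wrt (<) B \<and> last B < num_pos (A @ B)"
proof -
  define w where "w = A @ 0 # B @ C"
  have w_nth: "w ! (Suc (length A) + s) = B ! s" if "s < length B" for s
    using that by (simp add: w_def nth_append)
  have "(\<forall>t. Suc (length A) + 1 \<le> t \<and> t < Suc (length A) + length B \<longrightarrow> w ! (t - 1) < w ! t)
      \<longleftrightarrow> (\<forall>s. Suc s < length B \<longrightarrow> B ! s < B ! Suc s)"
  proof safe
    fix s assume "\<forall>t. Suc (length A) + 1 \<le> t \<and> t < Suc (length A) + length B \<longrightarrow> w ! (t - 1) < w ! t"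
      and s: "Suc s < length B"
    then have "w ! (Suc (length A) + s) < w ! (Suc (length A) + Suc s)"
      by (metis add_Suc_right add_diff_cancel_left' le_add1 add_less_cancel_left plus_1_eq_Suc
          add.commute)
    then show "B ! s < B ! Suc s" using s w_nth[of s] w_nth[of "Suc s"] by simp
  next
    fix t assume "\<forall>s. Suc s < length B \<longrightarrow> B ! s < B ! Suc s"
      and t: "Suc (length A) + 1 \<le> t" "t < Suc (length A) + length B"
    define s where "s = t - Suc (Suc (length A))"
    have "t - 1 = Suc (length A) + s" "t = Suc (length A) + Suc s" "Suc s < length B"
      using t by (auto simp: s_def)
    then show "w ! (t - 1) < w ! t"
      using \<open>\<forall>s. Suc s < length B \<longrightarrow> B ! s < B ! Suc s\<close> w_nth[of s] w_nth[of "Suc s"] by simp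
  qed
  moreover have "w ! (Suc (length A) + length B - 1) = last B"
    using assms w_nth[of "length B - 1"] by (cases B rule: rev_cases) auto
  moreover have "redw w (Suc (length A) + length B) = num_pos (A @ B)"
    by (simp add: w_def redw_eq)
  moreover have "1 \<le> length B" using assms by (cases B) auto
  ultimately show ?thesis
    unfolding rising_run_def w_def sorted_wrt_iff_nth_Suc_transp[OF transp_on_less] by simp
qed

lemma falling_run_iff:
  assumes "B \<noteq> []"
  shows "falling_run (A @ B @ 0 # D) (Suc (length A)) (length A + length B) \<longleftrightarrow>
    sorted_wrt (>) B \<and> hd B < num_pos (A @ [hd B])"
proof -
  define w where "w = A @ B @ 0 # D"
  have w_nth: "w ! (length A + s) = B ! s" if "s < length B" for s
    using that by (simp add: w_def nth_append)
  have "(\<forall>t. Suc (length A) \<le> t \<and> t < length A + length B \<longrightarrow> w ! t < w ! (t - 1))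
      \<longleftrightarrow> (\<forall>s. Suc s < length B \<longrightarrow> B ! Suc s < B ! s)"
  proof safe
    fix s assume "\<forall>t. Suc (length A) \<le> t \<and> t < length A + length B \<longrightarrow> w ! t < w ! (t - 1)"
      and s: "Suc s < length B"
    then have "w ! (length A + Suc s) < w ! (length A + s)"
      by (metis add_Suc_right diff_Suc_1 le_add1 Suc_le_mono add_less_cancel_left)
    then show "B ! Suc s < B ! s" using s w_nth[of s] w_nth[of "Suc s"] by simp
  next
    fix t assume "\<forall>s. Suc s < length B \<longrightarrow> B ! Suc s < B ! s"
      and t: "Suc (length A) \<le> t" "t < length A + length B"
    define s where "s = t - Suc (length A)"
    have "t - 1 = length A + s" "t = length A + Suc s" "Suc s < length B"
      using t by (auto simp: s_def)
    then show "w ! t < w ! (t - 1)"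
      using \<open>\<forall>s. Suc s < length B \<longrightarrow> B ! Suc s < B ! s\<close> w_nth[of s] w_nth[of "Suc s"] by simp
  qed
  moreover have "w ! length A = hd B"
    using assms w_nth[of 0] by (simp add: hd_conv_nth)
  moreover have "take (Suc (length A)) w = A @ [hd B]"
    using assms by (cases B) (simp_all add: w_def)
  moreover have "1 \<le> length B" using assms by (cases B) auto
  ultimately show ?thesis
    unfolding falling_run_def redw_eq w_def sorted_wrt_iff_nth_Suc_transp[OF transp_on_greater]
    by auto
qed

lemma phi_l_at_zero:
  assumes w: "w = A @ 0 # D" and l: "1 \<le> l" "num_zeros A = l - 1"
  shows "phi_l l w =
    (if right_subexc A D \<and> (\<not> left_subexc A \<or> hd D < last A) then
       let k = GREATEST k. rising_run w (Suc (length A)) k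
       in A @ drop (Suc (length A)) (take k w) @ 0 # drop k w
     else if left_subexc A \<and> (\<not> right_subexc A D \<or> last A < hd D) then
       let i = LEAST i. falling_run w i (length A) in take (i - 1) w @ 0 # drop (i - 1) A @ D
     else w)"
proof -
  have zj: "zeropos w ! (l - 1) = Suc (length A)"
    using zeropos_nth_num_zeros[of A D] w l by simp
  have lz: "\<not> (l < 1 \<or> l > length (zeropos w))"
    using l w by (simp add: length_zeropos)
  have sl: "subexc w (length A) = left_subexc A" and sr: "subexc w (Suc (Suc (length A))) = right_subexc A D"
    using w subexc_before_zero subexc_after_zero by simp_all
  have xl: "left_subexc A \<Longrightarrow> w ! (length A - Suc 0) = last A"
    using w by (auto simp: left_subexc_def nth_append last_conv_nth)
  have xr: "right_subexc A D \<Longrightarrow> w ! Suc (length A) = hd D"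
    using w by (cases D) (auto simp: right_subexc_def nth_append)
  have tk: "take (length A) w = A" "drop (Suc (length A)) w = D"
    using w by simp_all
  show ?thesis
    unfolding phi_l_def Let_def zj rising_run_def falling_run_def
    using lz sl sr xl xr tk by auto
qed

definition zero_stays :: "nat \<Rightarrow> nat list \<Rightarrow> nat list \<Rightarrow> bool" where
  "zero_stays l w u \<longleftrightarrow> (\<exists>A C. w = A @ 0 # C \<and> u = w \<and> num_zeros A = l - 1 \<and>
     (A = [] \<or> last A = 0 \<or> num_pos A < last A) \<and> (C = [] \<or> hd C = 0 \<or> Suc (num_pos A) < hd C))"

definition zero_moves_right :: "nat \<Rightarrow> nat list \<Rightarrow> nat list \<Rightarrow> bool" where
  "zero_moves_right l w u \<longleftrightarrow> (\<exists>A B C. w = A @ 0 # B @ C \<and> u = A @ B @ 0 # C \<and>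
     num_zeros A = l - 1 \<and> B \<noteq> [] \<and> (\<forall>x\<in>set B. 0 < x) \<and> sorted_wrt (<) B \<and>
     last B < num_pos A + length B \<and> (A = [] \<or> last A = 0 \<or> hd B < last A) \<and>
     (C = [] \<or> hd C = 0 \<or> (hd C < last B \<longleftrightarrow> hd C < Suc (num_pos A + length B))))"

definition zero_moves_left :: "nat \<Rightarrow> nat list \<Rightarrow> nat list \<Rightarrow> bool" where
  "zero_moves_left l w u \<longleftrightarrow> (\<exists>A B C. w = A @ B @ 0 # C \<and> u = A @ 0 # B @ C \<and>
     num_zeros A = l - 1 \<and> B \<noteq> [] \<and> (\<forall>x\<in>set B. 0 < x) \<and> sorted_wrt (>) B \<and>
     hd B < Suc (num_pos A) \<and> last B < num_pos A + length B \<and>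
     (A = [] \<or> last A = 0 \<or> (hd B < last A \<longleftrightarrow> num_pos A < last A)) \<and>
     (C = [] \<or> hd C = 0 \<or> last B < hd C))"

lemma longest_rising_run:
  assumes w: "w = A @ 0 # D" and R: "right_subexc A D"
  obtains B C where "D = B @ C" "B \<noteq> []"
    "(GREATEST k. rising_run w (Suc (length A)) k) = Suc (length A) + length B"
    "sorted_wrt (<) B" "\<forall>x\<in>set B. 0 < x" "last B < num_pos A + length B"
    "C = [] \<or> hd C = 0 \<or> \<not> (last B < hd C \<and> hd C < Suc (num_pos A + length B))"
proof -
  define j where "j = Suc (length A)"
  define K where "K = (GREATEST k. rising_run w j k)"
  have run_split: "rising_run w j (j + length B) \<longleftrightarrow> sorted_wrt (<) B \<and> last B < num_pos (A @ B)"
    if "D = B @ C" "B \<noteq> []" for B C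
    using rising_run_iff[OF that(2), of A C] w that(1) by (simp add: j_def)
  have bound: "rising_run w j k \<Longrightarrow> k \<le> length w" for k
    by (simp add: rising_run_def)
  have "rising_run w j (j + length [hd D])"
    using run_split[of "[hd D]" "tl D"] R by (auto simp: right_subexc_def)
  then have run: "rising_run w j K" and max: "\<And>k. rising_run w j k \<Longrightarrow> k \<le> K"
    unfolding K_def using GreatestI_nat[OF _ bound] Greatest_le_nat[OF _ bound] by blast+
  define B where "B = take (K - j) D"
  define C where "C = drop (K - j) D"
  have KB: "K = j + length B" and Bne: "B \<noteq> []"
    using run w by (auto simp: rising_run_def B_def j_def)
  have D: "D = B @ C" by (simp add: B_def C_def)
  have sorted: "sorted_wrt (<) B" and sub: "last B < num_pos (A @ B)"
    using run run_split[OF D Bne] KB by auto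
  have pos: "\<forall>x\<in>set B. 0 < x"
    using sorted Bne D R by (cases B) (auto simp: right_subexc_def)
  have npB: "num_pos B = length B" using all_pos_counts[OF pos] by simp
  have "\<not> (last B < hd C \<and> hd C < Suc (num_pos A + length B))" if "C \<noteq> []"
  proof
    assume "last B < hd C \<and> hd C < Suc (num_pos A + length B)"
    moreover have "\<forall>x\<in>set B. x \<le> last B"
      using sorted Bne by (cases B rule: rev_cases) (auto simp: sorted_wrt_append less_imp_le)
    ultimately have "rising_run w j (j + length (B @ [hd C]))"
      using run_split[of "B @ [hd C]" "tl C"] D that sorted npB by (auto simp: sorted_wrt_append)
    then show False using max KB by fastforce
  qed
  then show ?thesis
    using that[OF D Bne _ sorted pos] KB sub npB by (auto simp: K_def j_def)
qed

lemma zero_moves_right_phi_l: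
  assumes w: "w = A @ 0 # D" and l: "1 \<le> l" "num_zeros A = l - 1"
    and dist: "distinct (Pos w)" and der: "der_word w"
    and R: "right_subexc A D" and L: "\<not> left_subexc A \<or> hd D < last A"
  shows "zero_moves_right l w (phi_l l w)"
proof -
  obtain B C where D: "D = B @ C" and Bne: "B \<noteq> []"
    and K: "(GREATEST k. rising_run w (Suc (length A)) k) = Suc (length A) + length B"
    and sorted: "sorted_wrt (<) B" and pos: "\<forall>x\<in>set B. 0 < x"
    and sub: "last B < num_pos A + length B"
    and max: "C = [] \<or> hd C = 0 \<or> \<not> (last B < hd C \<and> hd C < Suc (num_pos A + length B))"
    using longest_rising_run[OF w R] by blast
  have phi: "phi_l l w = A @ B @ 0 # C"
    using phi_l_at_zero[OF w l] R L K w D by (simp add: Let_def)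
  have left: "A = [] \<or> last A = 0 \<or> hd B < last A"
    using L not_left_subexc[OF der_word_prefix[of A "0 # D"]] w der R D Bne
    by (auto simp: right_subexc_def)
  have right: "C = [] \<or> hd C = 0 \<or> (hd C < last B \<longleftrightarrow> hd C < Suc (num_pos A + length B))"
  proof (cases "C = [] \<or> hd C = 0")
    case False
    have "distinct (B @ Pos C)" using dist w D all_pos_counts[OF pos] by simp
    moreover have "hd C \<in> set (Pos C)" using False by (cases C) auto
    ultimately have "last B \<noteq> hd C" using last_in_set[OF Bne] by auto
    then show ?thesis using max sub False by auto
  qed blast
  have "w = A @ 0 # B @ C" using w D by simp
  then show ?thesis
    unfolding zero_moves_right_def using phi l(2) Bne pos sorted sub left right by blast
qed

lemma shortest_falling_run:
  assumes w: "w = A @ 0 # D" and L: "left_subexc A"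
  obtains A' B where "A = A' @ B" "B \<noteq> []" "(LEAST i. falling_run w i (length A)) = Suc (length A')"
    "sorted_wrt (>) B" "\<forall>x\<in>set B. 0 < x" "hd B < Suc (num_pos A')"
    "A' = [] \<or> last A' = 0 \<or> \<not> (hd B < last A' \<and> last A' < num_pos A')"
proof -
  define I where "I = (LEAST i. falling_run w i (length A))"
  have run_split: "falling_run w (Suc (length A')) (length A) \<longleftrightarrow>
      sorted_wrt (>) B \<and> hd B < num_pos (A' @ [hd B])"
    if "A = A' @ B" "B \<noteq> []" for A' B
    using falling_run_iff[OF that(2), of A' D] w that(1) by simp
  have Ane: "A \<noteq> []" using L by (simp add: left_subexc_def)
  have "falling_run w (Suc (length (butlast A))) (length A)"
    using run_split[of "butlast A" "[last A]"] L Ane by (simp add: left_subexc_def)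
  then have run: "falling_run w I (length A)"
    and min: "\<And>i. falling_run w i (length A) \<Longrightarrow> I \<le> i"
    unfolding I_def by (auto intro: LeastI Least_le)
  define A' where "A' = take (I - 1) A"
  define B where "B = drop (I - 1) A"
  have IA': "I = Suc (length A')" and Bne: "B \<noteq> []" and AB: "A = A' @ B"
    using run by (auto simp: falling_run_def A'_def B_def)
  have sorted: "sorted_wrt (>) B" and sub: "hd B < num_pos (A' @ [hd B])"
    using run run_split[OF AB Bne] IA' by auto
  have pos: "\<forall>x\<in>set B. 0 < x"
  proof
    fix x assume "x \<in> set B"
    then have "x = last B \<or> last B < x"
      using sorted Bne by (cases B rule: rev_cases) (auto simp: sorted_wrt_append)
    then show "0 < x" using AB Bne L by (auto simp: left_subexc_def)
  qed
  have "\<not> (hd B < last A' \<and> last A' < num_pos A')" if A'ne: "A' \<noteq> []"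
  proof
    assume a: "hd B < last A' \<and> last A' < num_pos A'"
    have A': "A' = butlast A' @ [last A']" using A'ne by simp
    then have "A = butlast A' @ last A' # B" using AB by (metis append.assoc append_Cons append_Nil)
    moreover have "sorted_wrt (>) (last A' # B)"
      using sorted a Bne by (cases B) (auto simp: less_imp_le)
    moreover have "num_pos (butlast A' @ [last A']) = num_pos A'" using A' by metis
    ultimately have "falling_run w (Suc (length (butlast A'))) (length A)"
      using run_split[of "butlast A'" "last A' # B"] a by simp
    then show False using min IA' A'ne by (cases A' rule: rev_cases) fastforce+
  qed
  then show ?thesis
    using that[OF AB Bne _ sorted pos] IA' sub pos Bne by (auto simp: I_def)
qed

lemma zero_moves_left_phi_l:
  assumes w: "w = A @ 0 # D" and l: "1 \<le> l" "num_zeros A = l - 1"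
    and der: "der_word w"
    and L: "left_subexc A" and R: "\<not> right_subexc A D \<or> last A < hd D"
  shows "zero_moves_left l w (phi_l l w)"
proof -
  obtain A' B where AB: "A = A' @ B" and Bne: "B \<noteq> []"
    and I: "(LEAST i. falling_run w i (length A)) = Suc (length A')"
    and sorted: "sorted_wrt (>) B" and pos: "\<forall>x\<in>set B. 0 < x" and hdB: "hd B < Suc (num_pos A')"
    and min: "A' = [] \<or> last A' = 0 \<or> \<not> (hd B < last A' \<and> last A' < num_pos A')"
    using shortest_falling_run[OF w L] by blast
  have phi: "phi_l l w = A' @ 0 # B @ D"
    using phi_l_at_zero[OF w l] L R I w AB by (auto simp: Let_def)
  have "A' = [] \<or> last A' = 0 \<or> last A' \<noteq> num_pos A'"
    using der_word_last[OF der_word_prefix[of A' "B @ 0 # D"]] der w AB by auto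
  then have left: "A' = [] \<or> last A' = 0 \<or> (hd B < last A' \<longleftrightarrow> num_pos A' < last A')"
    using min hdB by auto
  have lastB: "last B = last A" using AB Bne by simp
  have right: "D = [] \<or> hd D = 0 \<or> last B < hd D"
    using R lastB not_right_subexc[of A D] der w L by (auto simp: left_subexc_def)
  have "1 \<le> length B" "last B \<le> hd B"
    using Bne sorted by (cases B; auto simp: less_imp_le)+
  then have "last B < num_pos A' + length B" using hdB by linarith
  moreover have "num_zeros A' = l - 1" and "w = A' @ B @ 0 # D"
    using AB w l(2) all_pos_counts[OF pos] by simp_all
  ultimately show ?thesis
    unfolding zero_moves_left_def using phi Bne pos sorted hdB left right by blast
qed

lemma zero_stays_phi_l:
  assumes w: "w = A @ 0 # D" and l: "1 \<le> l" "num_zeros A = l - 1"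
    and dist: "distinct (Pos w)" and der: "der_word w"
    and R: "\<not> (right_subexc A D \<and> (\<not> left_subexc A \<or> hd D < last A))"
    and L: "\<not> (left_subexc A \<and> (\<not> right_subexc A D \<or> last A < hd D))"
  shows "zero_stays l w (phi_l l w)"
proof -
  have "last A \<noteq> hd D" if "left_subexc A" "right_subexc A D"
  proof -
    have "Pos w = Pos (butlast A) @ [last A] @ [hd D] @ Pos (tl D)"
      using w that by (cases D; cases A rule: rev_cases) (auto simp: left_subexc_def right_subexc_def)
    then show ?thesis using dist by auto
  qed
  then have nL: "\<not> left_subexc A" and nR: "\<not> right_subexc A D" using L R by auto
  have "phi_l l w = w" using phi_l_at_zero[OF w l] nL nR by simp
  moreover have "A = [] \<or> last A = 0 \<or> num_pos A < last A"
    using not_left_subexc[OF der_word_prefix[of A "0 # D"] nL] der w by simp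
  moreover have "D = [] \<or> hd D = 0 \<or> Suc (num_pos A) < hd D"
    using not_right_subexc[of A D] nR der w by simp
  ultimately show ?thesis unfolding zero_stays_def using w l by blast
qed

lemma phi_l_cases:
  assumes dist: "distinct (Pos w)" and der: "der_word w" and l: "1 \<le> l" "l \<le> num_zeros w"
  shows "zero_stays l w (phi_l l w) \<or> zero_moves_right l w (phi_l l w) \<or>
    zero_moves_left l w (phi_l l w)"
proof -
  obtain A D where w: "w = A @ 0 # D" and nzA: "num_zeros A = l - 1"
    using split_at_zero[OF l] by blast
  show ?thesis
    using zero_stays_phi_l[OF w l(1) nzA dist der] zero_moves_right_phi_l[OF w l(1) nzA dist der]
      zero_moves_left_phi_l[OF w l(1) nzA der] by blast
qed

lemma phi_l_out_of_range: "l < 1 \<or> num_zeros w < l \<Longrightarrow> phi_l l w = w"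
  unfolding phi_l_def by (auto simp: length_zeropos)

lemma phi_l_Pos:
  assumes "distinct (Pos w)" and "der_word w"
  shows "Pos (phi_l l w) = Pos w \<and> length (phi_l l w) = length w"
proof (cases "l < 1 \<or> num_zeros w < l")
  case False
  then show ?thesis
    using phi_l_cases[OF assms, of l]
    unfolding zero_stays_def zero_moves_right_def zero_moves_left_def by auto
qed (simp add: phi_l_out_of_range)

lemma phi_l_zder_words: "w \<in> zder_words n \<Longrightarrow> phi_l l w \<in> zder_words n"
  using phi_l_Pos[OF zder_wordsD(2,4)] zder_words_Pos_cong by metis

lemma adjacent_desc_at_increasing:
  assumes "\<forall>x\<in>set B. 0 < x" and "sorted_wrt (<) B"
  shows "adjacent (desc_at k) (annot_from p z B) = replicate (length B - 1) False"
proof -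
  have "B ! i < B ! Suc i" if "Suc i < length B" for i
    using sorted_wrt_nth_less[OF assms(2), of i "Suc i"] that by simp
  then show ?thesis
    using assms(1) by (subst adjacent_const[where c = False]) (auto simp: nth_annot_from less_not_sym)
qed

lemma adjacent_desc_at_decreasing:
  assumes "\<forall>x\<in>set B. 0 < x" and "sorted_wrt (>) B"
  shows "adjacent (desc_at k) (annot_from p z B) = replicate (length B - 1) True"
proof -
  have "B ! Suc i < B ! i" if "Suc i < length B" for i
    using sorted_wrt_nth_less[OF assms(2), of i "Suc i"] that by simp
  then show ?thesis
    using assms(1) by (subst adjacent_const[where c = True]) (auto simp: nth_annot_from)
qed

lemma adjacent_append_Cons_cong:
  "adjacent f L1 = adjacent g L1 \<Longrightarrow> adjacent f L2 = adjacent g L2 \<Longrightarrow>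
   (L1 \<noteq> [] \<Longrightarrow> f (last L1) e = g (last L1) e) \<Longrightarrow> (L2 \<noteq> [] \<Longrightarrow> f e (hd L2) = g e (hd L2)) \<Longrightarrow>
   adjacent f (L1 @ e # L2) = adjacent g (L1 @ e # L2)"
  by (cases "L1 = []"; cases "L2 = []") (simp_all add: adjacent_append_Cons adjacent_Cons)

lemma adjacent_move_across_block:
  "adjacent f LA = adjacent g LA \<Longrightarrow> adjacent f LC = adjacent g LC \<Longrightarrow> LB \<noteq> [] \<Longrightarrow>
   adjacent f LB = replicate (length LB - 1) c \<Longrightarrow> adjacent g LB = replicate (length LB - 1) c \<Longrightarrow>
   f e (hd LB) = c \<Longrightarrow> g (last LB) e = c \<Longrightarrow>
   (LA \<noteq> [] \<Longrightarrow> f (last LA) e = g (last LA) (hd LB)) \<Longrightarrow>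
   (LC \<noteq> [] \<Longrightarrow> f (last LB) (hd LC) = g e (hd LC)) \<Longrightarrow>
   adjacent f (LA @ e # LB @ LC) = adjacent g (LA @ LB @ e # LC)"
  by (cases "LA = []"; cases "LC = []")
    (simp_all add: adjacent_append_Cons adjacent_append adjacent_Cons replicate_append_same[symmetric])

lemma adjacent_desc_at_before_zero:
  "1 \<le> l \<Longrightarrow> num_zeros A = l - 1 \<Longrightarrow>
     adjacent (desc_at l) (annot_from 0 0 A) = adjacent (desc_at (l - 1)) (annot_from 0 0 A)"
  by (rule adjacent_desc_at_shift) (auto dest: annot_from_zero_bounds)

lemma adjacent_desc_at_after_zero:
  "1 \<le> l \<Longrightarrow> adjacent (desc_at l) (annot_from p l C) = adjacent (desc_at (l - 1)) (annot_from p l C)"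
  by (rule adjacent_desc_at_shift) (auto dest: annot_from_zero_bounds)

lemma DES_level_zero_stays:
  assumes l: "1 \<le> l" and "zero_stays l w u"
  shows "DES_level (l - 1) u = DES_level l w"
proof -
  obtain A C where w: "w = A @ 0 # C" and u: "u = w" and nzA: "num_zeros A = l - 1"
    and left: "A = [] \<or> last A = 0 \<or> num_pos A < last A"
    and right: "C = [] \<or> hd C = 0 \<or> Suc (num_pos A) < hd C"
    using assms(2) unfolding zero_stays_def by blast
  have aw: "annot w = annot_from 0 0 A @ (0, l) # annot_from (num_pos A) l C"
    using w nzA l by (simp add: annot_def annot_from_append)
  have "A \<noteq> [] \<Longrightarrow>
      desc_at l (last (annot_from 0 0 A)) (0, l) = desc_at (l - 1) (last (annot_from 0 0 A)) (0, l)"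
    using left l by (auto simp: last_annot_from)
  moreover have "C \<noteq> [] \<Longrightarrow> desc_at l (0, l) (hd (annot_from (num_pos A) l C)) =
      desc_at (l - 1) (0, l) (hd (annot_from (num_pos A) l C))"
    using right l by (auto simp: hd_annot_from)
  ultimately show ?thesis
    unfolding DES_level_def u aw
    by (subst adjacent_append_Cons_cong[OF adjacent_desc_at_before_zero[OF l nzA]
          adjacent_desc_at_after_zero[OF l]]) auto
qed

lemma DES_level_zero_moves_right:
  assumes l: "1 \<le> l" and "zero_moves_right l w u"
  shows "DES_level (l - 1) u = DES_level l w"
proof -
  obtain A B C where w: "w = A @ 0 # B @ C" and u: "u = A @ B @ 0 # C" and nzA: "num_zeros A = l - 1"
    and Bne: "B \<noteq> []" and pos: "\<forall>x\<in>set B. 0 < x" and inc: "sorted_wrt (<) B"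
    and sub: "last B < num_pos A + length B"
    and left: "A = [] \<or> last A = 0 \<or> hd B < last A"
    and right: "C = [] \<or> hd C = 0 \<or> (hd C < last B \<longleftrightarrow> hd C < Suc (num_pos A + length B))"
    using assms(2) unfolding zero_moves_right_def by blast
  note B = all_pos_counts[OF pos]
  define LA LB LC where "LA = annot_from 0 0 A" and "LB = annot_from (num_pos A) l B"
    and "LC = annot_from (num_pos A + length B) l C"
  have aw: "annot w = LA @ (0, l) # LB @ LC"
    using w nzA l B by (simp add: annot_def annot_from_append LA_def LB_def LC_def)
  have au: "annot u = LA @ LB @ (0, l) # LC"
    using u nzA l B annot_from_all_pos[OF pos, of "num_pos A" "l - 1" l]
    by (simp add: annot_def annot_from_append LA_def LB_def LC_def)
  have hB: "hd LB = (hd B, Suc (num_pos A))" and lB: "last LB = (last B, num_pos A + length B)"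
    using Bne pos B by (auto simp: hd_annot_from last_annot_from LB_def)
  have "0 < hd B" "0 < last B" using pos Bne by auto
  then have "adjacent (desc_at l) (LA @ (0, l) # LB @ LC) =
      adjacent (desc_at (l - 1)) (LA @ LB @ (0, l) # LC)"
    using adjacent_desc_at_increasing[OF pos inc] left right l sub nzA Bne hB lB
    unfolding LA_def LC_def
    by (intro adjacent_move_across_block[OF adjacent_desc_at_before_zero[OF l nzA]
          adjacent_desc_at_after_zero[OF l], where c = False])
      (auto simp: LB_def last_annot_from hd_annot_from)
  then show ?thesis unfolding DES_level_def aw au by simp
qed

lemma DES_level_zero_moves_left:
  assumes l: "1 \<le> l" and "zero_moves_left l w u"
  shows "DES_level (l - 1) u = DES_level l w"
proof -
  obtain A B C where w: "w = A @ B @ 0 # C" and u: "u = A @ 0 # B @ C" and nzA: "num_zeros A = l - 1"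
    and Bne: "B \<noteq> []" and pos: "\<forall>x\<in>set B. 0 < x" and dec: "sorted_wrt (>) B"
    and subh: "hd B < Suc (num_pos A)" and sub: "last B < num_pos A + length B"
    and left: "A = [] \<or> last A = 0 \<or> (hd B < last A \<longleftrightarrow> num_pos A < last A)"
    and right: "C = [] \<or> hd C = 0 \<or> last B < hd C"
    using assms(2) unfolding zero_moves_left_def by blast
  note B = all_pos_counts[OF pos]
  define LA LB LC where "LA = annot_from 0 0 A" and "LB = annot_from (num_pos A) l B"
    and "LC = annot_from (num_pos A + length B) l C"
  have au: "annot u = LA @ (0, l) # LB @ LC"
    using u nzA l B by (simp add: annot_def annot_from_append LA_def LB_def LC_def)
  have aw: "annot w = LA @ LB @ (0, l) # LC"
    using w nzA l B annot_from_all_pos[OF pos, of "num_pos A" "l - 1" l]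
    by (simp add: annot_def annot_from_append LA_def LB_def LC_def)
  have hB: "hd LB = (hd B, Suc (num_pos A))" and lB: "last LB = (last B, num_pos A + length B)"
    using Bne pos B by (auto simp: hd_annot_from last_annot_from LB_def)
  have "0 < hd B" "0 < last B" using pos Bne by auto
  then have "adjacent (desc_at (l - 1)) (LA @ (0, l) # LB @ LC) =
      adjacent (desc_at l) (LA @ LB @ (0, l) # LC)"
    using adjacent_desc_at_decreasing[OF pos dec] left right l sub subh nzA Bne hB lB
    unfolding LA_def LC_def
    by (intro adjacent_move_across_block[OF adjacent_desc_at_before_zero[OF l nzA, symmetric]
          adjacent_desc_at_after_zero[OF l, symmetric], where c = True])
      (auto simp: LB_def last_annot_from hd_annot_from)
  then show ?thesis unfolding DES_level_def aw au by simp
qed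

lemma DES_level_phi_l:
  assumes "w \<in> zder_words n" and l: "1 \<le> l"
  shows "DES_level (l - 1) (phi_l l w) = DES_level l w"
proof (cases "num_zeros w < l")
  case True
  then show ?thesis using DES_level_shift[OF l] phi_l_out_of_range[of l w] by simp
next
  case False
  then show ?thesis
    using phi_l_cases[OF zder_wordsD(2,4)[OF assms(1)] l] DES_level_zero_stays[OF l]
      DES_level_zero_moves_right[OF l] DES_level_zero_moves_left[OF l] by force
qed

text \<open>Each case of \<open>\<phi>\<^sub>l\<close> leaves a recognisable trace at the \<open>l\<close>-th zero of the image, so the
  case, and then the preimage, can be read off from the image.\<close>

lemma zero_stays_image:
  "zero_stays l w u \<Longrightarrow>
     \<exists>P S. u = P @ 0 # S \<and> num_zeros P = l - 1 \<and> \<not> left_subexc P \<and> \<not> right_subexc P S"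
  unfolding zero_stays_def left_subexc_def right_subexc_def by fastforce

lemma zero_moves_right_image:
  assumes "zero_moves_right l w u"
  shows "\<exists>P S. u = P @ 0 # S \<and> num_zeros P = l - 1 \<and> left_subexc P \<and>
    \<not> (right_subexc P S \<and> last P < hd S)"
proof -
  obtain A B C where u: "u = A @ B @ 0 # C" and nzA: "num_zeros A = l - 1"
    and Bne: "B \<noteq> []" and pos: "\<forall>x\<in>set B. 0 < x" and sub: "last B < num_pos A + length B"
    and right: "C = [] \<or> hd C = 0 \<or> (hd C < last B \<longleftrightarrow> hd C < Suc (num_pos A + length B))"
    using assms unfolding zero_moves_right_def by blast
  note B = all_pos_counts[OF pos]
  have "left_subexc (A @ B)" using Bne sub B pos by (simp add: left_subexc_def)
  moreover have "\<not> (right_subexc (A @ B) C \<and> last (A @ B) < hd C)"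
    using right Bne B by (auto simp: right_subexc_def)
  ultimately show ?thesis using u nzA B by (intro exI[of _ "A @ B"] exI[of _ C]) auto
qed

lemma zero_moves_left_image:
  assumes "zero_moves_left l w u"
  shows "\<exists>P S. u = P @ 0 # S \<and> num_zeros P = l - 1 \<and> right_subexc P S \<and>
    \<not> (left_subexc P \<and> hd S < last P)"
proof -
  obtain A B C where u: "u = A @ 0 # B @ C" and nzA: "num_zeros A = l - 1"
    and Bne: "B \<noteq> []" and pos: "\<forall>x\<in>set B. 0 < x" and subh: "hd B < Suc (num_pos A)"
    and left: "A = [] \<or> last A = 0 \<or> (hd B < last A \<longleftrightarrow> num_pos A < last A)"
    using assms unfolding zero_moves_left_def by blast
  have "right_subexc A (B @ C)" using Bne subh pos by (simp add: right_subexc_def)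
  moreover have "\<not> (left_subexc A \<and> hd (B @ C) < last A)"
    using left Bne by (auto simp: left_subexc_def)
  ultimately show ?thesis using u nzA by (intro exI[of _ A] exI[of _ "B @ C"]) auto
qed

lemma increasing_block_unique:
  fixes A1 A2 B1 B2 :: "nat list"
  assumes "A1 @ B1 = A2 @ B2" and "B1 \<noteq> []" "B2 \<noteq> []"
    and "sorted_wrt (<) B1" "sorted_wrt (<) B2" "\<forall>x\<in>set B1. 0 < x" "\<forall>x\<in>set B2. 0 < x"
    and "A1 = [] \<or> last A1 = 0 \<or> hd B1 < last A1" "A2 = [] \<or> last A2 = 0 \<or> hd B2 < last A2"
  shows "A1 = A2"
proof -
  have no_overlap: False if "A1 = A2 @ us" "us @ B1 = B2" "us \<noteq> []" "B1 \<noteq> []" "sorted_wrt (<) B2"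
    "\<forall>x\<in>set B2. 0 < x" "A1 = [] \<or> last A1 = 0 \<or> hd B1 < last A1"
    for A1 A2 B1 B2 us :: "nat list"
  proof -
    have "0 < last us" using that(2,3,6) by auto
    moreover have "last us < hd B1" using that(2-5) by (auto simp: sorted_wrt_append)
    moreover have "A1 \<noteq> []" "last A1 = last us" using that(1,3) by auto
    ultimately show False using that(7) by auto
  qed
  obtain us where "A1 = A2 @ us \<and> us @ B1 = B2 \<or> A1 @ us = A2 \<and> B1 = us @ B2"
    using assms(1) unfolding append_eq_append_conv2 by blast
  then show ?thesis
  proof
    assume "A1 = A2 @ us \<and> us @ B1 = B2"
    then show ?thesis using no_overlap[of A1 A2 us B1 B2] assms(2,5,7,8) by (cases "us = []") auto
  next
    assume "A1 @ us = A2 \<and> B1 = us @ B2"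
    then show ?thesis using no_overlap[of A2 A1 us B2 B1] assms(3,4,6,9) by (cases "us = []") auto
  qed
qed

lemma decreasing_block_unique:
  fixes B1 B2 C1 C2 :: "nat list"
  assumes "B1 @ C1 = B2 @ C2" and "B1 \<noteq> []" "B2 \<noteq> []"
    and "sorted_wrt (>) B1" "sorted_wrt (>) B2" "\<forall>x\<in>set B1. 0 < x" "\<forall>x\<in>set B2. 0 < x"
    and "C1 = [] \<or> hd C1 = 0 \<or> last B1 < hd C1" "C2 = [] \<or> hd C2 = 0 \<or> last B2 < hd C2"
  shows "B1 = B2"
proof -
  have no_overlap: False if "B2 = B1 @ us" "C1 = us @ C2" "us \<noteq> []" "B1 \<noteq> []" "sorted_wrt (>) B2"
    "\<forall>x\<in>set B2. 0 < x" "C1 = [] \<or> hd C1 = 0 \<or> last B1 < hd C1"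
    for B1 B2 C1 C2 us :: "nat list"
  proof -
    have "0 < hd us" using that(1,3,6) by auto
    moreover have "hd us < last B1" using that(1,3-5) by (auto simp: sorted_wrt_append)
    moreover have "C1 \<noteq> []" "hd C1 = hd us" using that(2,3) by auto
    ultimately show False using that(7) by auto
  qed
  obtain us where "B1 = B2 @ us \<and> us @ C1 = C2 \<or> B1 @ us = B2 \<and> C1 = us @ C2"
    using assms(1) unfolding append_eq_append_conv2 by blast
  then show ?thesis
  proof
    assume "B1 = B2 @ us \<and> us @ C1 = C2"
    then show ?thesis using no_overlap[of B1 B2 us C2 C1] assms(3,4,6,9) by (cases "us = []") auto
  next
    assume "B1 @ us = B2 \<and> C1 = us @ C2"
    then show ?thesis using no_overlap[of B2 B1 us C1 C2] assms(2,5,7,8) by (cases "us = []") auto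
  qed
qed

lemma zero_moves_right_excludes:
  assumes "distinct (Pos u)" and "zero_moves_right l w u"
  shows "\<not> zero_stays l w' u" and "\<not> zero_moves_left l w' u"
proof -
  obtain P S where 1: "u = P @ 0 # S" "num_zeros P = l - 1" "left_subexc P"
    "\<not> (right_subexc P S \<and> last P < hd S)"
    using zero_moves_right_image[OF assms(2)] by blast
  show "\<not> zero_stays l w' u"
  proof
    assume "zero_stays l w' u"
    then show False using zero_stays_image split_at_zero_unique 1 by metis
  qed
  show "\<not> zero_moves_left l w' u"
  proof
    assume "zero_moves_left l w' u"
    then obtain P' S' where 2: "u = P' @ 0 # S'" "num_zeros P' = l - 1" "right_subexc P' S'"
      "\<not> (left_subexc P' \<and> hd S' < last P')"
      using zero_moves_left_image by blast
    then have "P' = P" "S' = S" using split_at_zero_unique 1 by metis+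
    moreover have "last P \<in> set (Pos P)" "hd S \<in> set (Pos S)"
      using 1(3) 2(3) \<open>P' = P\<close> \<open>S' = S\<close>
      by (auto simp: left_subexc_def right_subexc_def Pos_def intro: last_in_set hd_in_set)
    then have "last P \<noteq> hd S" using assms(1) 1(1) by auto
    ultimately show False using 1 2 by auto
  qed
qed

lemma zero_stays_excludes_left:
  "zero_stays l w u \<Longrightarrow> \<not> zero_moves_left l w' u"
  using zero_stays_image zero_moves_left_image split_at_zero_unique by metis

lemma zero_stays_inj: "zero_stays l w1 u \<Longrightarrow> zero_stays l w2 u \<Longrightarrow> w1 = w2"
  unfolding zero_stays_def by auto

lemma zero_moves_right_inj:
  assumes "zero_moves_right l w1 u" and "zero_moves_right l w2 u"
  shows "w1 = w2"
proof -
  obtain A1 B1 C1 where 1: "w1 = A1 @ 0 # B1 @ C1" "u = A1 @ B1 @ 0 # C1" "num_zeros A1 = l - 1"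
    "B1 \<noteq> []" "\<forall>x\<in>set B1. 0 < x" "sorted_wrt (<) B1" "A1 = [] \<or> last A1 = 0 \<or> hd B1 < last A1"
    using assms(1) unfolding zero_moves_right_def by blast
  obtain A2 B2 C2 where 2: "w2 = A2 @ 0 # B2 @ C2" "u = A2 @ B2 @ 0 # C2" "num_zeros A2 = l - 1"
    "B2 \<noteq> []" "\<forall>x\<in>set B2. 0 < x" "sorted_wrt (<) B2" "A2 = [] \<or> last A2 = 0 \<or> hd B2 < last A2"
    using assms(2) unfolding zero_moves_right_def by blast
  have "num_zeros (A1 @ B1) = num_zeros (A2 @ B2)"
    using 1 2 all_pos_counts[of B1] all_pos_counts[of B2] by simp
  then have "A1 @ B1 = A2 @ B2" "C1 = C2"
    using split_at_zero_unique[of "A1 @ B1" C1 "A2 @ B2" C2] 1 2 by auto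
  moreover from this have "A1 = A2"
    using increasing_block_unique 1 2 by blast
  ultimately show ?thesis using 1 2 by simp
qed

lemma zero_moves_left_inj:
  assumes "zero_moves_left l w1 u" and "zero_moves_left l w2 u"
  shows "w1 = w2"
proof -
  obtain A1 B1 C1 where 1: "w1 = A1 @ B1 @ 0 # C1" "u = A1 @ 0 # B1 @ C1" "num_zeros A1 = l - 1"
    "B1 \<noteq> []" "\<forall>x\<in>set B1. 0 < x" "sorted_wrt (>) B1" "C1 = [] \<or> hd C1 = 0 \<or> last B1 < hd C1"
    using assms(1) unfolding zero_moves_left_def by blast
  obtain A2 B2 C2 where 2: "w2 = A2 @ B2 @ 0 # C2" "u = A2 @ 0 # B2 @ C2" "num_zeros A2 = l - 1"
    "B2 \<noteq> []" "\<forall>x\<in>set B2. 0 < x" "sorted_wrt (>) B2" "C2 = [] \<or> hd C2 = 0 \<or> last B2 < hd C2"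
    using assms(2) unfolding zero_moves_left_def by blast
  have "A1 = A2" "B1 @ C1 = B2 @ C2"
    using split_at_zero_unique[of A1 "B1 @ C1" A2 "B2 @ C2"] 1 2 by auto
  moreover from this have "B1 = B2"
    using decreasing_block_unique 1 2 by blast
  ultimately show ?thesis using 1 2 by simp
qed

lemma phi_l_inj_on: "inj_on (phi_l l) (zder_words n)"
proof (rule inj_onI)
  fix w1 w2 assume w1: "w1 \<in> zder_words n" and w2: "w2 \<in> zder_words n"
    and eq: "phi_l l w1 = phi_l l w2"
  note P1 = phi_l_Pos[OF zder_wordsD(2,4)[OF w1], of l]
  note P2 = phi_l_Pos[OF zder_wordsD(2,4)[OF w2], of l]
  have nz: "num_zeros w1 = num_zeros w2"
    using num_zeros_eq_if_Pos_eq[of w1 w2] P1 P2 eq by simp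
  show "w1 = w2"
  proof (cases "l < 1 \<or> num_zeros w1 < l")
    case True then show ?thesis using eq nz by (simp add: phi_l_out_of_range)
  next
    case False
    define u where "u = phi_l l w1"
    have "distinct (Pos u)" using P1 zder_wordsD(2)[OF w1] by (simp add: u_def)
    moreover have "zero_stays l w1 u \<or> zero_moves_right l w1 u \<or> zero_moves_left l w1 u"
      using phi_l_cases[OF zder_wordsD(2,4)[OF w1]] False by (simp add: u_def)
    moreover have "zero_stays l w2 u \<or> zero_moves_right l w2 u \<or> zero_moves_left l w2 u"
      using phi_l_cases[OF zder_wordsD(2,4)[OF w2]] False nz eq by (simp add: u_def)
    ultimately show ?thesis
      using zero_moves_right_excludes zero_stays_excludes_left
        zero_stays_inj zero_moves_right_inj zero_moves_left_inj by metis
  qed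
qed

lemma foldr_phi_l_zder_words: "w \<in> zder_words n \<Longrightarrow> foldr phi_l ls w \<in> zder_words n"
  by (induction ls) (auto intro: phi_l_zder_words)

lemma foldr_phi_l_Pos: "w \<in> zder_words n \<Longrightarrow> Pos (foldr phi_l ls w) = Pos w"
proof (induction ls)
  case (Cons l ls)
  then show ?case
    using phi_l_Pos[OF zder_wordsD(2,4)[OF foldr_phi_l_zder_words[OF Cons.prems]]] by simp
qed simp

lemma inj_on_foldr_phi_l: "inj_on (foldr phi_l ls) (zder_words n)"
proof (induction ls)
  case (Cons l ls)
  have "inj_on (phi_l l) (foldr phi_l ls ` zder_words n)"
    by (rule inj_on_subset[OF phi_l_inj_on]) (auto intro: foldr_phi_l_zder_words)
  then have "inj_on (phi_l l \<circ> foldr phi_l ls) (zder_words n)"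
    by (rule comp_inj_on[OF Cons.IH])
  then show ?case by (simp add: comp_def)
qed simp

lemma DES_level_foldr_phi_l:
  assumes "w \<in> zder_words n" and "d \<le> n"
  shows "DES_level (n - d) (foldr phi_l [Suc (n - d)..<Suc n] w) = DES w"
  using assms(2)
proof (induction d)
  case 0
  have "num_zeros w \<le> n"
    using num_pos_add_num_zeros[of w] zder_wordsD(1)[OF assms(1)] by simp
  then show ?case using DES_level_all_zeros by simp
next
  case (Suc d)
  define l where "l = n - d"
  have l: "1 \<le> l" "n - Suc d = l - 1" using Suc.prems by (auto simp: l_def)
  have "[l..<Suc n] = l # [Suc l..<Suc n]"
    by (rule upt_conv_Cons) (simp add: l_def)
  then have "[Suc (n - Suc d)..<Suc n] = l # [Suc l..<Suc n]"
    using l by simp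
  then have "DES_level (n - Suc d) (foldr phi_l [Suc (n - Suc d)..<Suc n] w) =
      DES_level l (foldr phi_l [Suc l..<Suc n] w)"
    using DES_level_phi_l[OF foldr_phi_l_zder_words[OF assms(1)] l(1)] l(2) by simp
  also have "\<dots> = DES w" using Suc by (simp add: l_def)
  finally show ?case .
qed

lemma PhiW_zder_words: "w \<in> zder_words n \<Longrightarrow> PhiW w \<in> zder_words n"
  unfolding PhiW_def by (rule foldr_phi_l_zder_words)

lemma PhiW_Pos: "w \<in> zder_words n \<Longrightarrow> Pos (PhiW w) = Pos w"
  unfolding PhiW_def by (rule foldr_phi_l_Pos)

lemma DES_level_PhiW: "w \<in> zder_words n \<Longrightarrow> DES_level 0 (PhiW w) = DES w"
  using DES_level_foldr_phi_l[of w n n] zder_wordsD(1)[of w n] unfolding PhiW_def by simp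

lemma bij_betw_PhiW: "bij_betw PhiW (zder_words n) (zder_words n)"
proof (rule bij_betw_zder_words[OF PhiW_zder_words])
  show "inj_on PhiW (zder_words n)"
    using inj_on_foldr_phi_l[of "[1..<n + 1]" n]
    by (rule inj_on_cong[THEN iffD1, rotated]) (simp add: PhiW_def zder_wordsD(1))
qed

section \<open>The map \<open>F\<^sub>3\<close>\<close>

fun pos_zero_inv :: "nat list \<Rightarrow> nat" where
  "pos_zero_inv [] = 0"
| "pos_zero_inv (x # xs) = (if 0 < x then num_zeros xs else 0) + pos_zero_inv xs"

lemma pos_zero_inv_append:
  "pos_zero_inv (xs @ ys) = pos_zero_inv xs + pos_zero_inv ys + num_pos xs * num_zeros ys"
  by (induction xs) auto

lemma pos_zero_inv_all_zero: "\<forall>y\<in>set Z. y = 0 \<Longrightarrow> pos_zero_inv Z = 0"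
  by (induction Z) auto

lemma pos_zero_inv_all_pos: "\<forall>y\<in>set P. 0 < y \<Longrightarrow> pos_zero_inv P = 0"
  by (induction P) (simp_all add: all_pos_counts)

lemma Zero_pos_snoc:
  "Zero_pos (v @ [x]) = Zero_pos v \<union> (if x = 0 then {Suc (length v)} else {})"
  unfolding Zero_pos_def by (auto simp: nth_append le_Suc_eq)

lemma Zero_pos_subset: "Zero_pos v \<subseteq> {1..length v}"
  by (auto simp: Zero_pos_def)

lemma card_sum_Zero_pos:
  "card (Zero_pos v) = num_zeros v \<and> \<Sum>(Zero_pos v) = \<Sum>{1..num_zeros v} + pos_zero_inv v"
proof (induction v rule: rev_induct)
  case Nil then show ?case by (simp add: Zero_pos_def)
next
  case (snoc x v)
  have fin: "finite (Zero_pos v)" using Zero_pos_subset finite_subset by blast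
  have nin: "Suc (length v) \<notin> Zero_pos v" using Zero_pos_subset by fastforce
  show ?case
  proof (cases "x = 0")
    case True
    then show ?thesis using snoc fin nin num_pos_add_num_zeros[of v]
      by (simp add: Zero_pos_snoc pos_zero_inv_append)
  next
    case False
    then show ?thesis using snoc by (simp add: Zero_pos_snoc pos_zero_inv_append)
  qed
qed

lemma mafz_eq: "mafz v = int (pos_zero_inv v) + int (maj (Pos v))"
  using card_sum_Zero_pos[of v] unfolding mafz_def zero_cnt_def by simp

lemma DES_snoc: "DES (w @ [b]) = DES w \<union> (if w \<noteq> [] \<and> b < last w then {length w} else {})"
proof (rule set_eqI)
  fix i
  have "i \<in> DES (w @ [b]) \<longleftrightarrow>
      (1 \<le> i \<and> i < length w \<and> w ! i < w ! (i - 1)) \<or> (i = length w \<and> w \<noteq> [] \<and> b < last w)"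
  proof (cases "i = length w \<and> w \<noteq> []")
    case True
    then have "(w @ [b]) ! i = b" "(w @ [b]) ! (i - 1) = last w"
      by (auto simp: nth_append last_conv_nth)
    then show ?thesis using True unfolding DES_def by (cases w) auto
  next
    case False
    then show ?thesis unfolding DES_def by (auto simp: nth_append)
  qed
  moreover have "i \<in> DES w \<longleftrightarrow> 1 \<le> i \<and> i < length w \<and> w ! i < w ! (i - 1)"
    unfolding DES_def by auto
  ultimately show "i \<in> DES (w @ [b]) \<longleftrightarrow> i \<in> DES w \<union> (if w \<noteq> [] \<and> b < last w then {length w} else {})"
    by auto
qed

lemma maj_snoc: "maj (w @ [b]) = maj w + (if w \<noteq> [] \<and> b < last w then length w else 0)"
proof -
  have "DES w \<subseteq> {1..length w - 1}" by (auto simp: DES_def)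
  then have "finite (DES w)" "length w \<notin> DES w"
    using finite_subset by fastforce+
  then show ?thesis by (simp add: maj_def DES_snoc)
qed

lemma maj_short: "length w \<le> 1 \<Longrightarrow> maj w = 0"
  by (simp add: maj_def DES_def)

lemma maj_zeros_snoc: "\<forall>y\<in>set u. y = 0 \<Longrightarrow> maj (u @ [b]) = 0"
proof -
  assume "\<forall>y\<in>set u. y = 0"
  then have "(u @ [b]) ! (i - 1) = 0" if "1 \<le> i" "i \<le> length u" for i
    using that by (auto simp: nth_append)
  then have "DES (u @ [b]) = {}" by (fastforce simp: DES_def)
  then show ?thesis by (simp add: maj_def)
qed

declare swapblocks.simps [simp del] F3W.simps [simp del]

lemma swapblocks_all_zero: "\<forall>y\<in>set l. y = 0 \<Longrightarrow> swapblocks l = l"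
  by (subst swapblocks.simps) (simp add: Let_def)

lemma swapblocks_unfold:
  assumes "\<exists>y\<in>set l. 0 < y"
  obtains Z x P s where "l = Z @ x # P @ s" "\<forall>y\<in>set Z. y = 0" "0 < x" "\<forall>y\<in>set P. 0 < y"
    "s = [] \<or> hd s = 0" "swapblocks l = x # Z @ P @ swapblocks s"
proof -
  define Z where "Z = takeWhile (\<lambda>y. y = 0) l"
  define rest where "rest = dropWhile (\<lambda>y. y = 0) l"
  obtain x t where rt: "rest = x # t"
    using assms unfolding rest_def by (cases "dropWhile (\<lambda>y. y = 0) l") (auto simp: dropWhile_eq_Nil_conv)
  have x: "0 < x" using hd_dropWhile[of "\<lambda>y. y = 0" l] rt unfolding rest_def by simp
  define P where "P = takeWhile (\<lambda>y. 0 < y) t"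
  define s where "s = dropWhile (\<lambda>y. 0 < y) t"
  have l: "l = Z @ x # P @ s" using rt unfolding Z_def rest_def P_def s_def by (metis takeWhile_dropWhile_id)
  have hs: "s = [] \<or> hd s = 0"
  proof (cases "s = []")
    case False
    then have "\<not> 0 < hd s" unfolding s_def by (rule hd_dropWhile)
    then show ?thesis by simp
  qed simp
  have sb: "swapblocks l = x # Z @ P @ swapblocks s"
    by (subst swapblocks.simps) (simp add: Let_def rt[unfolded rest_def] Z_def P_def s_def)
  have "\<forall>y\<in>set Z. y = 0" "\<forall>y\<in>set P. 0 < y"
    unfolding Z_def P_def by (auto dest: set_takeWhileD)
  then show ?thesis using that l x hs sb by blast
qed

lemma swapblocks_length_Pos: "length (swapblocks l) = length l \<and> Pos (swapblocks l) = Pos l"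
proof (induction "length l" arbitrary: l rule: less_induct)
  case less
  show ?case
  proof (cases "\<exists>y\<in>set l. 0 < y")
    case False then show ?thesis using swapblocks_all_zero by auto
  next
    case True
    then obtain Z x P s where d: "l = Z @ x # P @ s" "\<forall>y\<in>set Z. y = 0" "0 < x"
      "\<forall>y\<in>set P. 0 < y" "swapblocks l = x # Z @ P @ swapblocks s"
      by (rule swapblocks_unfold)
    have "length (swapblocks s) = length s \<and> Pos (swapblocks s) = Pos s"
      using less d(1) by simp
    then show ?thesis using d all_zero_counts[OF d(2)] all_pos_counts[OF d(4)] by simp
  qed
qed

lemma pos_zero_inv_swapblocks:
  "l = [] \<or> 0 < last l \<Longrightarrow> pos_zero_inv (swapblocks l) = pos_zero_inv l + num_zeros l"
proof (induction "length l" arbitrary: l rule: less_induct)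
  case less
  show ?case
  proof (cases "l = []")
    case True then show ?thesis by (simp add: swapblocks_all_zero)
  next
    case False
    then have "\<exists>y\<in>set l. 0 < y" using less.prems by auto
    then obtain Z x P s where d: "l = Z @ x # P @ s" "\<forall>y\<in>set Z. y = 0" "0 < x"
      "\<forall>y\<in>set P. 0 < y" "swapblocks l = x # Z @ P @ swapblocks s"
      by (rule swapblocks_unfold)
    have "s = [] \<or> 0 < last s" using less.prems False d(1) by (cases "s = []") auto
    then have IH: "pos_zero_inv (swapblocks s) = pos_zero_inv s + num_zeros s"
      using less d(1) by simp
    have "num_pos (swapblocks s) = num_pos s" "num_zeros (swapblocks s) = num_zeros s"
      using swapblocks_length_Pos[of s] num_zeros_eq_if_Pos_eq[of "swapblocks s" s]
      by (simp_all add: num_pos_def)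
    then show ?thesis
      using d all_zero_counts[OF d(2)] all_pos_counts[OF d(4)] pos_zero_inv_all_zero[OF d(2)]
        pos_zero_inv_all_pos[OF d(4)] IH
      by (simp add: pos_zero_inv_append algebra_simps)
  qed
qed

lemma swapblocks_hd: "\<exists>y\<in>set l. 0 < y \<Longrightarrow> swapblocks l \<noteq> [] \<and> 0 < hd (swapblocks l)"
  by (erule swapblocks_unfold) auto

definition starts_pos_zero :: "nat list \<Rightarrow> bool" where
  "starts_pos_zero T \<longleftrightarrow> T = [] \<or> (0 < hd T \<and> 2 \<le> length T \<and> T ! 1 = 0)"

lemma starts_pos_zero_swapblocks:
  assumes "s = [] \<or> (hd s = 0 \<and> 0 < last s)"
  shows "starts_pos_zero (swapblocks s)"
proof (cases "s = []")
  case True then show ?thesis by (simp add: swapblocks_all_zero starts_pos_zero_def)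
next
  case False
  then have h: "hd s = 0" "\<exists>y\<in>set s. 0 < y" using assms by auto
  from h(2) obtain Z x P s' where d: "s = Z @ x # P @ s'" "\<forall>y\<in>set Z. y = 0" "0 < x"
    "swapblocks s = x # Z @ P @ swapblocks s'"
    by (rule swapblocks_unfold)
  have "Z \<noteq> []" using d h(1) by (cases Z) auto
  then show ?thesis using d unfolding starts_pos_zero_def by (cases Z) auto
qed

lemma zero_prefix_unique:
  fixes Z1 Z2 :: "nat list"
  assumes "Z1 @ R1 = Z2 @ R2" "\<forall>y\<in>set Z1. y = 0" "\<forall>y\<in>set Z2. y = 0"
    "R1 = [] \<or> 0 < hd R1" "R2 = [] \<or> 0 < hd R2"
  shows "Z1 = Z2 \<and> R1 = R2"
  using assms
proof (induction Z1 arbitrary: Z2)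
  case Nil
  then show ?case by (cases Z2) auto
next
  case (Cons z Z1)
  then show ?case by (cases Z2) auto
qed

lemma pos_prefix_unique:
  fixes P1 P2 :: "nat list"
  assumes eq: "P1 @ T1 = P2 @ T2" and pos: "\<forall>y\<in>set P1. 0 < y" "\<forall>y\<in>set P2. 0 < y"
    and T: "starts_pos_zero T1" "starts_pos_zero T2"
  shows "P1 = P2 \<and> T1 = T2"
proof -
  have no_overlap: False
    if "us @ T1 = T2" "us \<noteq> []" "\<forall>y\<in>set us. 0 < y" "starts_pos_zero T1" "starts_pos_zero T2"
    for us T1 T2 :: "nat list"
  proof -
    have T2: "0 < hd T2" "2 \<le> length T2" "T2 ! 1 = 0"
      using that unfolding starts_pos_zero_def by auto
    show False
    proof (cases us)
      case (Cons u us')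
      show False
      proof (cases us')
        case Nil
        then have "T1 \<noteq> []" "T1 ! 0 = 0" using that(1) T2 Cons by auto
        then have "T1 \<noteq> []" "hd T1 = 0" by (simp_all add: hd_conv_nth)
        then show False using that(4) unfolding starts_pos_zero_def by auto
      next
        case (Cons u' us'')
        then show False using that(1,3) T2 \<open>us = u # us'\<close> by auto
      qed
    qed (use that in simp)
  qed
  obtain us where "P1 = P2 @ us \<and> us @ T1 = T2 \<or> P1 @ us = P2 \<and> T1 = us @ T2"
    using eq unfolding append_eq_append_conv2 by blast
  then show ?thesis
  proof
    assume "P1 = P2 @ us \<and> us @ T1 = T2"
    then show ?thesis using no_overlap[of us T1 T2] pos T by (cases "us = []") auto
  next
    assume "P1 @ us = P2 \<and> T1 = us @ T2"
    then show ?thesis using no_overlap[of us T2 T1] pos T by (cases "us = []") auto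
  qed
qed

lemma swapblocks_eq_Nil_iff: "l = [] \<or> 0 < last l \<Longrightarrow> swapblocks l = [] \<longleftrightarrow> l = []"
proof (cases "l = []")
  case False
  assume "l = [] \<or> 0 < last l"
  then have "\<exists>y\<in>set l. 0 < y" using False by (intro bexI[of _ "last l"]) auto
  then show ?thesis using False swapblocks_hd by auto
qed (simp add: swapblocks_all_zero)

lemma hd_append_pos: "\<forall>y\<in>set P. (0::nat) < y \<Longrightarrow> starts_pos_zero T \<Longrightarrow> P @ T = [] \<or> 0 < hd (P @ T)"
  by (cases P) (auto simp: starts_pos_zero_def)

lemma swapblocks_inj:
  "l1 = [] \<or> 0 < last l1 \<Longrightarrow> l2 = [] \<or> 0 < last l2 \<Longrightarrow> swapblocks l1 = swapblocks l2 \<Longrightarrow> l1 = l2"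
proof (induction "length l1" arbitrary: l1 l2 rule: less_induct)
  case less
  show ?case
  proof (cases "l1 = [] \<or> l2 = []")
    case True
    then show ?thesis
      using swapblocks_eq_Nil_iff[OF less.prems(1)] swapblocks_eq_Nil_iff[OF less.prems(2)] less.prems(3)
      by auto
  next
    case False
    then have e: "\<exists>y\<in>set l1. 0 < y" "\<exists>y\<in>set l2. 0 < y"
      using less.prems(1,2) last_in_set by blast+
    obtain Z1 x1 P1 s1 where d1: "l1 = Z1 @ x1 # P1 @ s1" "\<forall>y\<in>set Z1. y = 0" "0 < x1"
      "\<forall>y\<in>set P1. 0 < y" "s1 = [] \<or> hd s1 = 0" "swapblocks l1 = x1 # Z1 @ P1 @ swapblocks s1"
      by (rule swapblocks_unfold[OF e(1)])
    obtain Z2 x2 P2 s2 where d2: "l2 = Z2 @ x2 # P2 @ s2" "\<forall>y\<in>set Z2. y = 0" "0 < x2"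
      "\<forall>y\<in>set P2. 0 < y" "s2 = [] \<or> hd s2 = 0" "swapblocks l2 = x2 # Z2 @ P2 @ swapblocks s2"
      by (rule swapblocks_unfold[OF e(2)])
    have s1: "s1 = [] \<or> (hd s1 = 0 \<and> 0 < last s1)" and s2: "s2 = [] \<or> (hd s2 = 0 \<and> 0 < last s2)"
      using d1(1,5) d2(1,5) less.prems(1,2) by auto
    note sh1 = starts_pos_zero_swapblocks[OF s1] and sh2 = starts_pos_zero_swapblocks[OF s2]
    have "x1 = x2" and Z: "Z1 @ (P1 @ swapblocks s1) = Z2 @ (P2 @ swapblocks s2)"
      using less.prems(3) d1(6) d2(6) by simp_all
    then have "Z1 = Z2" and "P1 @ swapblocks s1 = P2 @ swapblocks s2"
      using zero_prefix_unique[OF Z d1(2) d2(2) hd_append_pos[OF d1(4) sh1] hd_append_pos[OF d2(4) sh2]]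
      by auto
    then have "P1 = P2" and "swapblocks s1 = swapblocks s2"
      using pos_prefix_unique[OF _ d1(4) d2(4) sh1 sh2] by auto
    moreover have "s1 = s2"
      using less.hyps[of s1 s2] d1(1) s1 s2 \<open>swapblocks s1 = swapblocks s2\<close> by auto
    ultimately show ?thesis using d1(1) d2(1) \<open>x1 = x2\<close> \<open>Z1 = Z2\<close> by simp
  qed
qed

text \<open>Case (2) and case (3) of the definition of \<open>F\<^sub>3\<close>, as a function of \<open>F\<^sub>3(w' a 0\<^sup>r)\<close>; which case
  applies is read off from the last letter, since \<open>F\<^sub>3\<close> keeps it.\<close>

definition descent_step :: "nat list \<Rightarrow> nat list" where
  "descent_step v = (if last v = 0 then 0 # butlast v else swapblocks v)"

lemma F3W_base: "length w \<le> 1 \<or> (\<forall>y\<in>set (butlast w). y = 0) \<Longrightarrow> F3W w = w"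
  by (subst F3W.simps) simp

lemma snoc_cases [case_names base snoc]:
  fixes w :: "nat list"
  obtains "length w \<le> 1 \<or> (\<forall>y\<in>set (butlast w). y = 0)"
  | u b where "w = u @ [b]" "u \<noteq> []" "\<exists>y\<in>set u. 0 < y"
proof (cases "length w \<le> 1 \<or> (\<forall>y\<in>set (butlast w). y = 0)")
  case False
  then obtain u b where "w = u @ [b]" by (cases w rule: rev_cases) auto
  with False that(2) show ?thesis by fastforce
qed

lemma F3W_snoc_last:
  assumes "u \<noteq> []" "\<exists>y\<in>set u. 0 < y"
  shows "F3W (u @ [b]) = (if last (Pos u) \<le> b then F3W u
     else if last u = 0 then 0 # butlast (F3W u) else swapblocks (F3W u)) @ [b]"
proof -
  have nb: "\<not> (length (u @ [b]) \<le> 1 \<or> (\<forall>y\<in>set u. y = 0))"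
    using assms by (cases u) auto
  have r: "(1 \<le> length (takeWhile (\<lambda>y. y = 0) (rev u))) = (last u = 0)"
    using assms(1) by (cases u rule: rev_cases) auto
  show ?thesis
    by (subst F3W.simps) (simp only: nb if_False Let_def butlast_snoc last_snoc Pos_def[symmetric] r,
        simp)
qed

lemma descent_step_length_Pos:
  "v \<noteq> [] \<Longrightarrow> length (descent_step v) = length v \<and> Pos (descent_step v) = Pos v"
  using swapblocks_length_Pos[of v] by (cases v rule: rev_cases) (auto simp: descent_step_def)

lemma F3W_length_Pos_last:
  "length (F3W w) = length w \<and> Pos (F3W w) = Pos w \<and> (w \<noteq> [] \<longrightarrow> last (F3W w) = last w)"
proof (induction "length w" arbitrary: w rule: less_induct)
  case less
  show ?case
  proof (cases w rule: snoc_cases)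
    case base then show ?thesis by (simp add: F3W_base)
  next
    case (snoc u b)
    then have IH: "length (F3W u) = length u \<and> Pos (F3W u) = Pos u \<and> last (F3W u) = last u"
      using less by simp
    then have "F3W w = (if last (Pos u) \<le> b then F3W u else descent_step (F3W u)) @ [b]"
      using F3W_snoc_last[OF snoc(2,3)] snoc(1) by (simp add: descent_step_def)
    moreover have "F3W u \<noteq> []" using IH snoc(2) by auto
    ultimately show ?thesis using IH descent_step_length_Pos[of "F3W u"] snoc(1) by auto
  qed
qed

lemma F3W_snoc:
  assumes "u \<noteq> []" "\<exists>y\<in>set u. 0 < y"
  shows "F3W (u @ [b]) = (if last (Pos u) \<le> b then F3W u else descent_step (F3W u)) @ [b]"
  using F3W_snoc_last[OF assms] F3W_length_Pos_last[of u] assms(1) by (simp add: descent_step_def)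

lemma F3W_zder_words: "w \<in> zder_words n \<Longrightarrow> F3W w \<in> zder_words n"
  using F3W_length_Pos_last[of w] zder_words_Pos_cong[of w n "F3W w"] by simp

lemma descent_step_inj:
  assumes "\<exists>y\<in>set v1. 0 < y" "\<exists>y\<in>set v2. 0 < y" and eq: "descent_step v1 = descent_step v2"
  shows "v1 = v2"
proof -
  have ne: "v1 \<noteq> []" "v2 \<noteq> []" using assms(1,2) by auto
  have sb: "0 # v' \<noteq> swapblocks v" if "\<exists>y\<in>set v. 0 < y" for v v'
    using swapblocks_hd[OF that] by (metis less_irrefl list.sel(1))
  show ?thesis
  proof (cases "last v1 = 0"; cases "last v2 = 0")
    assume "last v1 = 0" "last v2 = 0"
    then show ?thesis using eq ne by (simp add: descent_step_def) (metis append_butlast_last_id)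
  next
    assume "last v1 = 0" "last v2 \<noteq> 0"
    then show ?thesis using eq sb[OF assms(2)] by (auto simp: descent_step_def)
  next
    assume "last v1 \<noteq> 0" "last v2 = 0"
    then show ?thesis using eq sb[OF assms(1)] by (auto simp: descent_step_def)
  next
    assume "last v1 \<noteq> 0" "last v2 \<noteq> 0"
    then show ?thesis using eq swapblocks_inj[of v1 v2] by (simp add: descent_step_def)
  qed
qed

lemma F3W_snoc_inj:
  assumes u1: "\<exists>y\<in>set u1. 0 < y" and u2: "\<exists>y\<in>set u2. 0 < y" and "Pos u1 = Pos u2"
    and eq: "F3W (u1 @ [b]) = F3W (u2 @ [b])"
  shows "F3W u1 = F3W u2"
proof -
  have ne: "u1 \<noteq> []" "u2 \<noteq> []" using u1 u2 by auto
  have eq': "(if last (Pos u1) \<le> b then F3W u1 else descent_step (F3W u1)) =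
      (if last (Pos u1) \<le> b then F3W u2 else descent_step (F3W u2))"
    using eq unfolding F3W_snoc[OF ne(1) u1] F3W_snoc[OF ne(2) u2] \<open>Pos u1 = Pos u2\<close> by simp
  have "\<exists>y\<in>set (F3W u1). 0 < y" "\<exists>y\<in>set (F3W u2). 0 < y"
    using u1 u2 Pos_neq_Nil_iff F3W_length_Pos_last[of u1] F3W_length_Pos_last[of u2] by metis+
  then show ?thesis using eq' descent_step_inj by (cases "last (Pos u1) \<le> b") auto
qed

lemma F3W_inj: "F3W w1 = F3W w2 \<Longrightarrow> w1 = w2"
proof (induction "length w1" arbitrary: w1 w2 rule: less_induct)
  case less
  note L1 = F3W_length_Pos_last[of w1] and L2 = F3W_length_Pos_last[of w2]
  have len: "length w1 = length w2" and Peq: "Pos w1 = Pos w2"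
    using L1 L2 less.prems by metis+
  show ?case
  proof (cases "w1 = []")
    case False
    obtain u1 b1 where w1: "w1 = u1 @ [b1]" using False by (cases w1 rule: rev_cases) auto
    obtain u2 b2 where w2: "w2 = u2 @ [b2]" using False len by (cases w2 rule: rev_cases) auto
    have b: "b1 = b2" using L1 L2 less.prems w1 w2 by (metis last_snoc snoc_eq_iff_butlast)
    then have Pu: "Pos u1 = Pos u2"
      using Peq w1 w2 by (auto split: if_splits)
    have eq: "F3W (u1 @ [b1]) = F3W (u2 @ [b1])"
      using less.prems[unfolded w1 w2 b[symmetric]] .
    show ?thesis
    proof (cases "Pos u1 = []")
      case True
      then have "\<forall>y\<in>set u1. y = 0" "\<forall>y\<in>set u2. y = 0"
        using Pu Pos_eq_Nil_iff by metis+
      then show ?thesis using eq w1 w2 b by (simp add: F3W_base)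
    next
      case False
      then have "Pos u1 \<noteq> []" "Pos u2 \<noteq> []" using Pu by simp_all
      then have "\<exists>y\<in>set u1. 0 < y" "\<exists>y\<in>set u2. 0 < y"
        by (simp_all only: Pos_neq_Nil_iff)
      then have "F3W u1 = F3W u2" using F3W_snoc_inj Pu eq by blast
      then have "u1 = u2" using less.hyps[of u1] w1 by simp
      then show ?thesis using w1 w2 b by simp
    qed
  qed (use len in simp)
qed

lemma bij_betw_F3W: "bij_betw F3W (zder_words n) (zder_words n)"
  by (rule bij_betw_zder_words[OF F3W_zder_words]) (auto intro: inj_onI F3W_inj)

lemma pos_zero_inv_descent_step_zero:
  assumes "v \<noteq> []" "last v = 0"
  shows "pos_zero_inv (descent_step v) + num_pos v = pos_zero_inv v"
proof -
  have v: "v = butlast v @ [0]" using assms by (metis append_butlast_last_id)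
  have "pos_zero_inv v = pos_zero_inv (butlast v) + num_pos (butlast v)"
    by (subst v) (simp add: pos_zero_inv_append)
  moreover have "num_pos v = num_pos (butlast v)" by (subst v) simp
  ultimately show ?thesis using assms(2) by (simp add: descent_step_def)
qed

lemma pos_zero_inv_descent_step_pos:
  "last v \<noteq> 0 \<Longrightarrow> pos_zero_inv (descent_step v) = pos_zero_inv v + num_zeros v"
  using pos_zero_inv_swapblocks[of v] by (cases "v = []") (simp_all add: descent_step_def)

lemma pos_zero_inv_F3W_base:
  assumes "length w \<le> 1 \<or> (\<forall>y\<in>set (butlast w). y = 0)"
  shows "pos_zero_inv (F3W w) + maj (Pos w) = maj w"
proof (cases "length w \<le> 1")
  case True
  then have "length (Pos w) \<le> 1" unfolding Pos_def by (metis le_trans length_filter_le)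
  then show ?thesis using True by (cases w) (auto simp: F3W_base maj_short)
next
  case False
  then obtain u b where w: "w = u @ [b]" and z: "\<forall>y\<in>set u. y = 0"
    using assms by (cases w rule: rev_cases) auto
  then have "Pos w = Pos [b]" using all_zero_counts[OF z] by simp
  then show ?thesis
    using assms w z maj_zeros_snoc[OF z] all_zero_counts[OF z] pos_zero_inv_all_zero[OF z]
    by (simp add: F3W_base maj_short pos_zero_inv_append)
qed

lemma pos_zero_inv_F3W_snoc:
  assumes u: "u \<noteq> []" "\<exists>y\<in>set u. 0 < y"
    and IH: "pos_zero_inv (F3W u) + maj (Pos u) = maj u"
  shows "pos_zero_inv (F3W (u @ [b])) + maj (Pos (u @ [b])) = maj (u @ [b])"
proof -
  define v where "v = F3W u"
  define a where "a = last (Pos u)"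
  have v: "length v = length u" "Pos v = Pos u" "last v = last u" "v \<noteq> []"
    using F3W_length_Pos_last[of u] u(1) by (auto simp: v_def)
  have sizes: "num_pos v = num_pos u" "num_zeros v = num_zeros u"
    "length u = num_pos u + num_zeros u"
    using v num_zeros_eq_if_Pos_eq[of v u] num_pos_add_num_zeros[of u] by (simp_all add: num_pos_def)
  have Pne: "Pos u \<noteq> []" using u(2) Pos_neq_Nil_iff by blast
  have a: "0 < a" using Pne last_in_set[OF Pne] unfolding a_def by (auto simp: Pos_def)
  have lu: "last u = 0 \<or> last u = a"
    using u(1) unfolding a_def by (cases u rule: rev_cases) auto
  have maj_u: "maj (u @ [b]) = maj u + (if b < last u then length u else 0)"
    using u maj_snoc by simp
  have maj_Pos: "maj (Pos (u @ [b])) = maj (Pos u) + (if 0 < b \<and> b < a then num_pos u else 0)"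
    using maj_snoc[of "Pos u" b] Pne by (simp add: a_def num_pos_def)
  show ?thesis
  proof (cases "a \<le> b")
    case True
    then show ?thesis using F3W_snoc[OF u] IH maj_u maj_Pos a lu sizes
      unfolding a_def v_def by (auto simp: pos_zero_inv_append)
  next
    case False
    then have F3: "F3W (u @ [b]) = descent_step v @ [b]"
      using F3W_snoc[OF u] unfolding a_def v_def by simp
    have "num_pos (descent_step v) = num_pos u"
      using descent_step_length_Pos[OF v(4)] sizes by (simp add: num_pos_def)
    then have "pos_zero_inv (F3W (u @ [b])) = pos_zero_inv (descent_step v) + (if b = 0 then num_pos u else 0)"
      using F3 by (simp add: pos_zero_inv_append)
    then show ?thesis
      using pos_zero_inv_descent_step_zero[OF v(4)] pos_zero_inv_descent_step_pos[of v]
        IH[folded v_def] maj_u maj_Pos lu v(3) a False sizes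
      by (cases "last u = 0") auto
  qed
qed

lemma pos_zero_inv_F3W: "pos_zero_inv (F3W w) + maj (Pos w) = maj w"
proof (induction "length w" arbitrary: w rule: less_induct)
  case less
  show ?case
  proof (cases w rule: snoc_cases)
    case base
    then show ?thesis by (rule pos_zero_inv_F3W_base)
  next
    case (snoc u b)
    then show ?thesis using less pos_zero_inv_F3W_snoc[of u] by simp
  qed
qed

section \<open>The encoding \<open>ZDer\<close>\<close>

definition rank_in :: "nat set \<Rightarrow> nat \<Rightarrow> nat" where
  "rank_in S j = card {k \<in> S. k \<le> j}"

lemma rank_in_less: "finite S \<Longrightarrow> a \<in> S \<Longrightarrow> b \<in> S \<Longrightarrow> a < b \<Longrightarrow> rank_in S a < rank_in S b"
proof -
  assume f: "finite S" and b: "b \<in> S" and ab: "a < b"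
  have "{k \<in> S. k \<le> a} \<subseteq> {k \<in> S. k \<le> b}" "b \<notin> {k \<in> S. k \<le> a}" "b \<in> {k \<in> S. k \<le> b}"
    using ab b by auto
  then have "{k \<in> S. k \<le> a} \<subset> {k \<in> S. k \<le> b}" by blast
  moreover have "finite {k \<in> S. k \<le> b}" using f by simp
  ultimately show ?thesis unfolding rank_in_def by (rule psubset_card_mono[rotated])
qed

lemma rank_in_less_iff: "finite S \<Longrightarrow> a \<in> S \<Longrightarrow> b \<in> S \<Longrightarrow> rank_in S a < rank_in S b \<longleftrightarrow> a < b"
  by (metis less_asym linorder_neqE_nat rank_in_less)

lemma inj_on_rank_in: "finite S \<Longrightarrow> inj_on (rank_in S) S"
  by (rule inj_onI) (metis less_irrefl linorder_neqE_nat rank_in_less)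

lemma rank_in_bounds: "finite S \<Longrightarrow> a \<in> S \<Longrightarrow> 1 \<le> rank_in S a \<and> rank_in S a \<le> card S"
  unfolding rank_in_def by (auto simp: Suc_le_eq card_gt_0_iff intro: card_mono)

lemma rank_in_image: "finite S \<Longrightarrow> rank_in S ` S = {1..card S}"
proof -
  assume f: "finite S"
  have "rank_in S ` S \<subseteq> {1..card S}" using rank_in_bounds[OF f] by auto
  moreover have "card (rank_in S ` S) = card {1..card S}"
    using card_image[OF inj_on_rank_in[OF f]] by simp
  ultimately show ?thesis using card_subset_eq by (metis finite_atLeastAtMost)
qed

lemma card_positions_filter:
  "card {i. 1 \<le> i \<and> i \<le> length w \<and> P (w ! (i - 1))} = length (filter P w)"
proof -
  have "{i. 1 \<le> i \<and> i \<le> length w \<and> P (w ! (i - 1))} = Suc ` {i. i < length w \<and> P (w ! i)}"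
  proof (intro equalityI subsetI)
    fix i assume "i \<in> {i. 1 \<le> i \<and> i \<le> length w \<and> P (w ! (i - 1))}"
    then have "i = Suc (i - 1)" "i - 1 \<in> {i. i < length w \<and> P (w ! i)}" by auto
    then show "i \<in> Suc ` {i. i < length w \<and> P (w ! i)}" by (rule image_eqI)
  qed auto
  then show ?thesis by (simp add: card_image length_filter_conv_card)
qed

definition pos_positions :: "nat list \<Rightarrow> nat set" where
  "pos_positions w = {i. 1 \<le> i \<and> i \<le> length w \<and> 0 < w ! (i - 1)}"

lemma finite_pos_positions: "finite (pos_positions w)"
  unfolding pos_positions_def by (rule finite_subset[of _ "{1..length w}"]) auto

lemma num_pos_take: "k \<le> length w \<Longrightarrow> num_pos (take k w) = rank_in (pos_positions w) k"
proof -
  assume k: "k \<le> length w"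
  have "num_pos (take k w) = card {i. 1 \<le> i \<and> i \<le> k \<and> 0 < take k w ! (i - 1)}"
    using card_positions_filter[of "take k w" "\<lambda>x. 0 < x"] k by (simp add: num_pos_def Pos_def)
  also have "{i. 1 \<le> i \<and> i \<le> k \<and> 0 < take k w ! (i - 1)} = {j \<in> pos_positions w. j \<le> k}"
    using k by (auto simp: pos_positions_def)
  finally show ?thesis by (simp add: rank_in_def)
qed

lemma num_pos_eq_card: "num_pos w = card (pos_positions w)"
  using card_positions_filter[of w "\<lambda>x. 0 < x"] by (simp add: num_pos_def Pos_def pos_positions_def)

lemma nth_annot:
  assumes "1 \<le> i" "i \<le> length w"
  shows "annot w ! (i - 1) =
    (w ! (i - 1), if 0 < w ! (i - 1) then rank_in (pos_positions w) i else i - rank_in (pos_positions w) i)"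
proof -
  have "num_zeros (take i w) = i - num_pos (take i w)"
    using num_pos_add_num_zeros[of "take i w"] assms by simp
  then show ?thesis
    using nth_annot_from[of "i - 1" w 0 0] num_pos_take[OF assms(2)] assms by (simp add: annot_def)
qed

lemma annot_zero_rank_pos: "e \<in> set (annot w) \<Longrightarrow> fst e = 0 \<Longrightarrow> 0 < snd e"
  using annot_from_zero_bounds[of e 0 0 w] by (simp add: annot_def)

definition exc_word :: "nat list \<Rightarrow> nat" where
  "exc_word w = length (filter (\<lambda>e. snd e < fst e) (annot w))"

lemma exc_word_Pos: "exc_word w = length (filter (\<lambda>e. snd e < fst e) (zip (Pos w) [1..<Suc (num_pos w)]))"
proof -
  have "filter (\<lambda>e. snd e < fst e) (annot w) =
      filter (\<lambda>e. snd e < fst e) (filter (\<lambda>e. 0 < fst e) (annot w))"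
    unfolding filter_filter by (rule filter_cong) auto
  then show ?thesis unfolding exc_word_def by (simp add: annot_def filter_pos_annot_from del: upt_Suc)
qed

context
  fixes s :: "nat list" and n :: nat
  assumes perm: "s \<in> perms n"
begin

definition perm_at :: "nat \<Rightarrow> nat" where
  "perm_at i = s ! (i - 1)"

definition nonfixed :: "nat set" where
  "nonfixed = {i. 1 \<le> i \<and> i \<le> n \<and> perm_at i \<noteq> i}"

definition zder_at :: "nat \<Rightarrow> nat" where
  "zder_at i = (if perm_at i = i then 0 else rank_in nonfixed (perm_at i))"

lemma length_perm: "length s = n"
  using perm by (simp add: perms_def)

lemma perm_at_bounds: "1 \<le> i \<Longrightarrow> i \<le> n \<Longrightarrow> 1 \<le> perm_at i \<and> perm_at i \<le> n"
proof -
  assume "1 \<le> i" "i \<le> n"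
  then have "s ! (i - 1) \<in> set s" using length_perm by simp
  then show ?thesis using perm by (simp add: perms_def perm_at_def)
qed

lemma perm_at_inj: "1 \<le> i \<Longrightarrow> i \<le> n \<Longrightarrow> 1 \<le> j \<Longrightarrow> j \<le> n \<Longrightarrow> perm_at i = perm_at j \<Longrightarrow> i = j"
proof -
  assume "1 \<le> i" "i \<le> n" "1 \<le> j" "j \<le> n" "perm_at i = perm_at j"
  moreover have "distinct s" using perm by (simp add: perms_def)
  ultimately have "i - 1 = j - 1"
    using length_perm unfolding perm_at_def by (simp add: nth_eq_iff_index_eq)
  then show "i = j" using \<open>1 \<le> i\<close> \<open>1 \<le> j\<close> by simp
qed

lemma finite_nonfixed: "finite nonfixed"
  unfolding nonfixed_def by (rule finite_subset[of _ "{1..n}"]) auto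

lemma perm_at_nonfixed: "i \<in> nonfixed \<Longrightarrow> perm_at i \<in> nonfixed"
proof -
  assume i: "i \<in> nonfixed"
  then have r: "1 \<le> perm_at i \<and> perm_at i \<le> n" using perm_at_bounds unfolding nonfixed_def by auto
  have "perm_at (perm_at i) \<noteq> perm_at i"
  proof
    assume "perm_at (perm_at i) = perm_at i"
    then have "perm_at i = i" using perm_at_inj[of "perm_at i" i] r i unfolding nonfixed_def by auto
    then show False using i unfolding nonfixed_def by simp
  qed
  then show ?thesis using r unfolding nonfixed_def by simp
qed

lemma perm_at_image_nonfixed: "perm_at ` nonfixed = nonfixed"
proof (rule endo_inj_surj[OF finite_nonfixed])
  show "perm_at ` nonfixed \<subseteq> nonfixed" using perm_at_nonfixed by auto
  show "inj_on perm_at nonfixed" by (rule inj_onI) (use perm_at_inj in \<open>auto simp: nonfixed_def\<close>)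
qed

lemma ZDer_eq_map: "ZDer s = map zder_at [1..<n + 1]"
  unfolding ZDer_def Let_def zder_at_def nonfixed_def rank_in_def perm_at_def
  using length_perm by simp

lemma length_ZDer: "length (ZDer s) = n"
  unfolding ZDer_eq_map by simp

lemma nth_ZDer: "1 \<le> i \<Longrightarrow> i \<le> n \<Longrightarrow> ZDer s ! (i - 1) = zder_at i"
  unfolding ZDer_eq_map by (simp del: upt_Suc)

lemma zder_at_pos_iff: "1 \<le> i \<Longrightarrow> i \<le> n \<Longrightarrow> 0 < zder_at i \<longleftrightarrow> i \<in> nonfixed"
proof (cases "i \<in> nonfixed")
  case True
  then have "1 \<le> rank_in nonfixed (perm_at i)"
    using rank_in_bounds[OF finite_nonfixed perm_at_nonfixed[OF True]] by simp
  then show ?thesis using True unfolding zder_at_def nonfixed_def by auto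
qed (auto simp: zder_at_def nonfixed_def)

lemma pos_positions_ZDer: "pos_positions (ZDer s) = nonfixed"
  using zder_at_pos_iff nth_ZDer length_ZDer unfolding pos_positions_def by (auto simp: nonfixed_def)

lemma nth_annot_ZDer:
  "1 \<le> i \<Longrightarrow> i \<le> n \<Longrightarrow>
     annot (ZDer s) ! (i - 1) = (zder_at i, if i \<in> nonfixed then rank_in nonfixed i else i - rank_in nonfixed i)"
  using nth_annot[of i "ZDer s"] length_ZDer nth_ZDer zder_at_pos_iff pos_positions_ZDer by simp

lemma fixp_eq_num_zeros: "fixp s = num_zeros (ZDer s)"
proof -
  have "fixp s = card {i. 1 \<le> i \<and> i \<le> n \<and> perm_at i = i}"
    unfolding fixp_def perm_at_def using length_perm by simp
  also have "{i. 1 \<le> i \<and> i \<le> n \<and> perm_at i = i} =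
      {i. 1 \<le> i \<and> i \<le> length (ZDer s) \<and> ZDer s ! (i - 1) = 0}"
  proof (rule Collect_cong)
    fix i
    show "(1 \<le> i \<and> i \<le> n \<and> perm_at i = i) = (1 \<le> i \<and> i \<le> length (ZDer s) \<and> ZDer s ! (i - 1) = 0)"
    proof (cases "1 \<le> i \<and> i \<le> n")
      case True
      then show ?thesis
        using nth_ZDer zder_at_pos_iff[of i] length_ZDer unfolding nonfixed_def by auto
    qed (use length_ZDer in auto)
  qed
  finally show ?thesis
    using card_positions_filter[of "ZDer s" "\<lambda>x. x = 0"] by (simp add: num_zeros_def)
qed

lemma exc_eq_exc_word: "exc s = exc_word (ZDer s)"
proof -
  have "exc s = card {i. 1 \<le> i \<and> i \<le> n \<and> i < perm_at i}"
    unfolding exc_def perm_at_def using length_perm by simp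
  also have "{i. 1 \<le> i \<and> i \<le> n \<and> i < perm_at i} =
      {i. 1 \<le> i \<and> i \<le> length (annot (ZDer s)) \<and>
        snd (annot (ZDer s) ! (i - 1)) < fst (annot (ZDer s) ! (i - 1))}"
  proof -
    have "i < perm_at i \<longleftrightarrow> snd (annot (ZDer s) ! (i - 1)) < fst (annot (ZDer s) ! (i - 1))"
      if i: "1 \<le> i" "i \<le> n" for i
    proof (cases "i \<in> nonfixed")
      case True
      then show ?thesis
        using nth_annot_ZDer[OF i] rank_in_less_iff[OF finite_nonfixed True perm_at_nonfixed[OF True]]
        unfolding zder_at_def nonfixed_def by auto
    next
      case False
      then show ?thesis using nth_annot_ZDer[OF i] i unfolding zder_at_def nonfixed_def by auto
    qed
    moreover have "length (annot (ZDer s)) = n" using length_ZDer by (simp add: annot_def)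
    ultimately show ?thesis by (intro Collect_cong) auto
  qed
  finally show ?thesis
    using card_positions_filter[of "annot (ZDer s)" "\<lambda>e. snd e < fst e"] by (simp add: exc_word_def)
qed

lemma zero_rank_pos: "1 \<le> i \<Longrightarrow> i \<le> n \<Longrightarrow> i \<notin> nonfixed \<Longrightarrow> 0 < i - rank_in nonfixed i"
proof -
  assume i: "1 \<le> i" "i \<le> n" "i \<notin> nonfixed"
  have "annot (ZDer s) ! (i - 1) \<in> set (annot (ZDer s))"
    using i length_ZDer by (simp add: annot_def)
  moreover have "annot (ZDer s) ! (i - 1) = (0, i - rank_in nonfixed i)"
    using nth_annot_ZDer[OF i(1,2)] i unfolding zder_at_def nonfixed_def by auto
  ultimately show ?thesis using annot_zero_rank_pos by fastforce
qed

text \<open>A descent of \<open>\<sigma>\<close> at \<open>i\<close> is a descent of level \<open>0\<close> of \<open>ZDer \<sigma>\<close>: comparisons between two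
  non-fixed points are preserved by ranking, and a fixed point \<open>i\<close> exceeds \<open>\<sigma>(i + 1)\<close> exactly when
  \<open>\<sigma>(i + 1)\<close> is subexcedent (and symmetrically on the left).\<close>

lemma desc_at_0_ZDer:
  assumes i: "1 \<le> i" "Suc i \<le> n"
  shows "desc_at 0 (annot (ZDer s) ! (i - 1)) (annot (ZDer s) ! i) \<longleftrightarrow> perm_at (Suc i) < perm_at i"
proof -
  have i2: "i \<le> n" "1 \<le> Suc i" using i by auto
  have ea: "annot (ZDer s) ! (i - 1) =
      (zder_at i, if i \<in> nonfixed then rank_in nonfixed i else i - rank_in nonfixed i)"
    using nth_annot_ZDer[OF i(1) i2(1)] .
  have eb: "annot (ZDer s) ! i = (zder_at (Suc i),
      if Suc i \<in> nonfixed then rank_in nonfixed (Suc i) else Suc i - rank_in nonfixed (Suc i))"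
    using nth_annot_ZDer[OF i2(2) i(2)] by simp
  have ga: "0 < zder_at i \<longleftrightarrow> i \<in> nonfixed" and gb: "0 < zder_at (Suc i) \<longleftrightarrow> Suc i \<in> nonfixed"
    using zder_at_pos_iff i i2 by blast+
  have neq: "perm_at i \<noteq> perm_at (Suc i)" using perm_at_inj[of i "Suc i"] i i2 by auto
  note rk = rank_in_less_iff[OF finite_nonfixed]
  show ?thesis
  proof (cases "i \<in> nonfixed"; cases "Suc i \<in> nonfixed")
    assume a: "i \<in> nonfixed" "Suc i \<in> nonfixed"
    have "zder_at i = rank_in nonfixed (perm_at i)" "zder_at (Suc i) = rank_in nonfixed (perm_at (Suc i))"
      using a unfolding zder_at_def nonfixed_def by auto
    moreover have "0 < zder_at i" "0 < zder_at (Suc i)" using a ga gb by auto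
    ultimately show ?thesis using ea eb rk[OF perm_at_nonfixed[OF a(2)] perm_at_nonfixed[OF a(1)]] by simp
  next
    assume a: "i \<in> nonfixed" "Suc i \<notin> nonfixed"
    have fb: "perm_at (Suc i) = Suc i" using a i unfolding nonfixed_def by auto
    have "zder_at i = rank_in nonfixed (perm_at i)" using a unfolding zder_at_def nonfixed_def by auto
    moreover have "zder_at (Suc i) = 0" "0 < zder_at i" using a ga gb by auto
    moreover have "0 < Suc i - rank_in nonfixed (Suc i)" using zero_rank_pos[OF i2(2) i(2) a(2)] .
    moreover have "perm_at i \<noteq> i" using a unfolding nonfixed_def by auto
    ultimately show ?thesis using ea eb rk[OF a(1) perm_at_nonfixed[OF a(1)]] fb neq a by auto
  next
    assume a: "i \<notin> nonfixed" "Suc i \<in> nonfixed"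
    have fa: "perm_at i = i" using a i i2 unfolding nonfixed_def by auto
    have "zder_at (Suc i) = rank_in nonfixed (perm_at (Suc i))" using a unfolding zder_at_def nonfixed_def by auto
    moreover have "zder_at i = 0" "0 < zder_at (Suc i)" using a ga gb by auto
    moreover have "0 < i - rank_in nonfixed i" using zero_rank_pos[OF i(1) i2(1) a(1)] .
    moreover have "perm_at (Suc i) \<noteq> Suc i" using a unfolding nonfixed_def by auto
    ultimately show ?thesis using ea eb rk[OF perm_at_nonfixed[OF a(2)] a(2)] fa neq a by auto
  next
    assume a: "i \<notin> nonfixed" "Suc i \<notin> nonfixed"
    have "perm_at i = i" "perm_at (Suc i) = Suc i" using a i i2 unfolding nonfixed_def by auto
    moreover have "zder_at i = 0" "zder_at (Suc i) = 0" using a ga gb by auto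
    ultimately show ?thesis using ea eb by simp
  qed
qed

lemma DES_eq_DES_level: "DES s = DES_level 0 (ZDer s)"
proof -
  have "DES_level 0 (ZDer s) =
      {i. 1 \<le> i \<and> i \<le> n - 1 \<and> desc_at 0 (annot (ZDer s) ! (i - 1)) (annot (ZDer s) ! i)}"
    unfolding DES_level_def true_positions_def using length_ZDer by (auto simp: nth_adjacent annot_def)
  also have "\<dots> = {i. 1 \<le> i \<and> i \<le> n - 1 \<and> perm_at (Suc i) < perm_at i}"
    using desc_at_0_ZDer by (intro Collect_cong) auto
  also have "\<dots> = DES s" unfolding DES_def perm_at_def using length_perm by simp
  finally show ?thesis by simp
qed

lemma Pos_ZDer: "Pos (ZDer s) = map zder_at (filter (\<lambda>i. i \<in> nonfixed) [1..<n + 1])"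
proof -
  have "Pos (ZDer s) = map zder_at (filter (\<lambda>i. 0 < zder_at i) [1..<n + 1])"
    unfolding ZDer_eq_map Pos_def by (simp add: filter_map o_def)
  also have "filter (\<lambda>i. 0 < zder_at i) [1..<n + 1] = filter (\<lambda>i. i \<in> nonfixed) [1..<n + 1]"
    using zder_at_pos_iff by (intro filter_cong) auto
  finally show ?thesis .
qed

lemma inj_on_zder_at: "inj_on zder_at nonfixed"
proof (rule inj_onI)
  fix i j assume i: "i \<in> nonfixed" and j: "j \<in> nonfixed" and e: "zder_at i = zder_at j"
  have "rank_in nonfixed (perm_at i) = rank_in nonfixed (perm_at j)"
    using e i j unfolding zder_at_def nonfixed_def by auto
  then have "perm_at i = perm_at j"
    using inj_on_rank_in[OF finite_nonfixed] perm_at_nonfixed[OF i] perm_at_nonfixed[OF j]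
    by (auto dest: inj_onD)
  then show "i = j" using perm_at_inj i j unfolding nonfixed_def by auto
qed

lemma der_word_ZDer: "der_word (ZDer s)"
  unfolding der_word_def
proof (intro ballI impI)
  fix e assume e: "e \<in> set (annot (ZDer s))" and p: "0 < fst e"
  then obtain k where k: "k < n" "e = annot (ZDer s) ! k"
    using length_ZDer by (auto simp: in_set_conv_nth annot_def)
  have i: "1 \<le> Suc k" "Suc k \<le> n" using k by auto
  have ee: "e = (zder_at (Suc k),
      if Suc k \<in> nonfixed then rank_in nonfixed (Suc k) else Suc k - rank_in nonfixed (Suc k))"
    using nth_annot_ZDer[OF i] k by simp
  then have nf: "Suc k \<in> nonfixed" using p zder_at_pos_iff[OF i] by simp
  then have "e = (rank_in nonfixed (perm_at (Suc k)), rank_in nonfixed (Suc k))"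
    and "perm_at (Suc k) \<noteq> Suc k"
    using ee unfolding zder_at_def nonfixed_def by auto
  moreover have "rank_in nonfixed (perm_at (Suc k)) \<noteq> rank_in nonfixed (Suc k)"
    using inj_on_rank_in[OF finite_nonfixed] perm_at_nonfixed[OF nf] nf calculation(2)
    by (auto dest: inj_onD)
  ultimately show "fst e \<noteq> snd e" by simp
qed

lemma ZDer_zder_words: "ZDer s \<in> zder_words n"
proof -
  have setf: "set (filter (\<lambda>i. i \<in> nonfixed) [1..<n + 1]) = nonfixed"
    unfolding nonfixed_def by auto
  have dist: "distinct (Pos (ZDer s))"
    unfolding Pos_ZDer using inj_on_zder_at setf by (simp add: distinct_map)
  have "set (Pos (ZDer s)) = zder_at ` nonfixed" unfolding Pos_ZDer using setf by simp
  also have "\<dots> = rank_in nonfixed ` perm_at ` nonfixed"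
    unfolding image_image by (intro image_cong) (auto simp: nonfixed_def zder_at_def)
  also have "\<dots> = {1..card nonfixed}"
    using perm_at_image_nonfixed rank_in_image[OF finite_nonfixed] by simp
  finally have setP: "set (Pos (ZDer s)) = {1..card nonfixed}" .
  then have "num_pos (ZDer s) = card nonfixed" using distinct_card[OF dist] by (simp add: num_pos_def)
  then show ?thesis
    unfolding zder_words_def using length_ZDer dist setP der_word_ZDer by simp
qed

lemma nth_ZDer_perm:
  "1 \<le> i \<Longrightarrow> i \<le> n \<Longrightarrow>
     ZDer s ! (i - 1) = (if s ! (i - 1) = i then 0 else rank_in {j. 1 \<le> j \<and> j \<le> n \<and> s ! (j - 1) \<noteq> j} (s ! (i - 1)))"
  using nth_ZDer unfolding zder_at_def nonfixed_def perm_at_def by simp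

lemma ZDer_nonfixed_pos:
  "1 \<le> i \<Longrightarrow> i \<le> n \<Longrightarrow> s ! (i - 1) \<noteq> i \<Longrightarrow>
     s ! (i - 1) \<in> {j. 1 \<le> j \<and> j \<le> n \<and> s ! (j - 1) \<noteq> j} \<and> 0 < ZDer s ! (i - 1)"
proof -
  assume i: "1 \<le> i" "i \<le> n" "s ! (i - 1) \<noteq> i"
  then have "i \<in> nonfixed" unfolding nonfixed_def perm_at_def by simp
  then show ?thesis
    using perm_at_nonfixed zder_at_pos_iff[OF i(1,2)] nth_ZDer[OF i(1,2)]
    unfolding nonfixed_def perm_at_def by auto
qed

end

lemma inj_on_ZDer: "inj_on ZDer (perms n)"
proof (rule inj_onI)
  fix s1 s2 assume s1: "s1 \<in> perms n" and s2: "s2 \<in> perms n" and e: "ZDer s1 = ZDer s2"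
  define N1 where "N1 = {j. 1 \<le> j \<and> j \<le> n \<and> s1 ! (j - 1) \<noteq> j}"
  define N2 where "N2 = {j. 1 \<le> j \<and> j \<le> n \<and> s2 ! (j - 1) \<noteq> j}"
  have p1: "1 \<le> j \<Longrightarrow> j \<le> n \<Longrightarrow> s1 ! (j - 1) \<noteq> j \<longleftrightarrow> 0 < ZDer s1 ! (j - 1)" for j
    using nth_ZDer_perm[OF s1, of j] ZDer_nonfixed_pos[OF s1, of j] by auto
  have p2: "1 \<le> j \<Longrightarrow> j \<le> n \<Longrightarrow> s2 ! (j - 1) \<noteq> j \<longleftrightarrow> 0 < ZDer s2 ! (j - 1)" for j
    using nth_ZDer_perm[OF s2, of j] ZDer_nonfixed_pos[OF s2, of j] by auto
  have NN: "N1 = N2" unfolding N1_def N2_def using p1 p2 e by auto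
  have fin: "finite N1" unfolding N1_def by (rule finite_subset[of _ "{1..n}"]) auto
  have eqi: "s1 ! (i - 1) = s2 ! (i - 1)" if i: "1 \<le> i" "i \<le> n" for i
  proof (cases "s1 ! (i - 1) = i")
    case True
    then show ?thesis using p1[OF i] p2[OF i] e by auto
  next
    case False
    then have F2: "s2 ! (i - 1) \<noteq> i" using p1[OF i] p2[OF i] e by auto
    have "rank_in N1 (s1 ! (i - 1)) = rank_in N2 (s2 ! (i - 1))"
      using nth_ZDer_perm[OF s1 i] nth_ZDer_perm[OF s2 i] e False F2 unfolding N1_def N2_def by simp
    moreover have "s1 ! (i - 1) \<in> N1" using ZDer_nonfixed_pos[OF s1 i False] unfolding N1_def by simp
    moreover have "s2 ! (i - 1) \<in> N1" using ZDer_nonfixed_pos[OF s2 i F2] NN unfolding N2_def by simp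
    ultimately show ?thesis using inj_on_rank_in[OF fin] NN by (auto dest: inj_onD)
  qed
  have l: "length s1 = n" "length s2 = n" using s1 s2 by (auto simp: perms_def)
  show "s1 = s2"
  proof (rule nth_equalityI)
    show "length s1 = length s2" using l by simp
    fix k assume "k < length s1"
    then show "s1 ! k = s2 ! k" using eqi[of "Suc k"] l by simp
  qed
qed

context
  fixes w :: "nat list" and n :: nat
  assumes zw: "w \<in> zder_words n"
begin

definition preimage_at :: "nat \<Rightarrow> nat" where
  "preimage_at i =
     (if 0 < w ! (i - 1) then inv_into (pos_positions w) (rank_in (pos_positions w)) (w ! (i - 1)) else i)"

lemma pos_positions_subset: "pos_positions w \<subseteq> {1..n}"
  using zder_wordsD(1)[OF zw] by (auto simp: pos_positions_def)

lemma preimage_at_pos: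
  assumes "i \<in> pos_positions w"
  shows "preimage_at i \<in> pos_positions w \<and> rank_in (pos_positions w) (preimage_at i) = w ! (i - 1)"
proof -
  have "rank_in (pos_positions w) ` pos_positions w = set (Pos w)"
    using rank_in_image[OF finite_pos_positions] zder_wordsD(3)[OF zw] num_pos_eq_card[of w] by simp
  moreover have "w ! (i - 1) \<in> set (Pos w)" "0 < w ! (i - 1)"
    using assms by (auto simp: pos_positions_def Pos_def)
  ultimately show ?thesis unfolding preimage_at_def by (simp add: inv_into_into f_inv_into_f)
qed

lemma preimage_at_zero: "1 \<le> i \<Longrightarrow> i \<le> n \<Longrightarrow> i \<notin> pos_positions w \<Longrightarrow> preimage_at i = i"
  using zder_wordsD(1)[OF zw] unfolding preimage_at_def pos_positions_def by auto

lemma preimage_at_moves: "i \<in> pos_positions w \<Longrightarrow> preimage_at i \<noteq> i"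
proof -
  assume i: "i \<in> pos_positions w"
  then have i1: "1 \<le> i" "i \<le> length w" "0 < w ! (i - 1)" unfolding pos_positions_def by auto
  have "annot w ! (i - 1) = (w ! (i - 1), rank_in (pos_positions w) i)"
    using nth_annot[OF i1(1,2)] i1(3) by simp
  moreover have "annot w ! (i - 1) \<in> set (annot w)" using i1 by (simp add: annot_def)
  ultimately have "w ! (i - 1) \<noteq> rank_in (pos_positions w) i"
    using zder_wordsD(4)[OF zw] i1(3) unfolding der_word_def by fastforce
  then show ?thesis using preimage_at_pos[OF i] by metis
qed

lemma inj_on_preimage_at: "inj_on preimage_at {1..n}"
proof (rule inj_onI)
  fix i j assume i: "i \<in> {1..n}" and j: "j \<in> {1..n}" and e: "preimage_at i = preimage_at j"
  show "i = j"
  proof (cases "i \<in> pos_positions w \<and> j \<in> pos_positions w")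
    case True
    then have "w ! (i - 1) = w ! (j - 1)" using preimage_at_pos e by metis
    moreover have "inj_on (\<lambda>i. w ! (i - 1)) (pos_positions w)"
    proof -
      have "Pos w = map (\<lambda>i. w ! (i - 1)) (filter (\<lambda>i. 0 < w ! (i - 1)) [1..<length w + 1])"
      proof -
        have e: "w = map (\<lambda>i. w ! (i - 1)) [1..<length w + 1]"
          by (rule nth_equalityI) (simp_all del: upt_Suc)
        have "Pos w = filter (\<lambda>x. 0 < x) (map (\<lambda>i. w ! (i - 1)) [1..<length w + 1])"
          unfolding Pos_def by (subst e) (rule refl)
        then show ?thesis by (simp add: filter_map o_def)
      qed
      then have "inj_on (\<lambda>i. w ! (i - 1)) (set (filter (\<lambda>i. 0 < w ! (i - 1)) [1..<length w + 1]))"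
        using zder_wordsD(2)[OF zw] by (simp add: distinct_map)
      moreover have "set (filter (\<lambda>i. 0 < w ! (i - 1)) [1..<length w + 1]) = pos_positions w"
        unfolding pos_positions_def by auto
      ultimately show ?thesis by simp
    qed
    ultimately show ?thesis using True by (auto dest: inj_onD)
  next
    case False
    then show ?thesis
      using preimage_at_pos preimage_at_zero i j e pos_positions_subset by (metis atLeastAtMost_iff)
  qed
qed

lemma preimage_at_image: "preimage_at ` {1..n} = {1..n}"
proof (rule endo_inj_surj[OF _ _ inj_on_preimage_at])
  show "preimage_at ` {1..n} \<subseteq> {1..n}"
    using preimage_at_pos preimage_at_zero pos_positions_subset by fastforce
qed simp

definition preimage :: "nat list" where
  "preimage = map preimage_at [1..<n + 1]"

lemma nth_preimage: "1 \<le> i \<Longrightarrow> i \<le> n \<Longrightarrow> preimage ! (i - 1) = preimage_at i"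
  unfolding preimage_def by (simp del: upt_Suc)

lemma preimage_perms: "preimage \<in> perms n"
proof -
  have su: "set [1..<n + 1] = {1..n}" by auto
  have "distinct preimage"
    unfolding preimage_def distinct_map using inj_on_preimage_at su by (simp del: upt_Suc)
  moreover have "set preimage = {1..n}"
    unfolding preimage_def using preimage_at_image su by (simp del: upt_Suc)
  ultimately show ?thesis unfolding perms_def by (simp add: preimage_def)
qed

lemma nonfixed_preimage: "{j. 1 \<le> j \<and> j \<le> n \<and> preimage ! (j - 1) \<noteq> j} = pos_positions w"
proof (intro set_eqI iffI)
  fix x assume "x \<in> {j. 1 \<le> j \<and> j \<le> n \<and> preimage ! (j - 1) \<noteq> j}"
  then have x: "1 \<le> x" "x \<le> n" "preimage_at x \<noteq> x" using nth_preimage by auto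
  show "x \<in> pos_positions w"
  proof (rule ccontr)
    assume "x \<notin> pos_positions w"
    then show False using preimage_at_zero[OF x(1,2)] x(3) by simp
  qed
next
  fix x assume x: "x \<in> pos_positions w"
  then have "1 \<le> x" "x \<le> n" using pos_positions_subset by auto
  then show "x \<in> {j. 1 \<le> j \<and> j \<le> n \<and> preimage ! (j - 1) \<noteq> j}"
    using nth_preimage preimage_at_moves[OF x] by simp
qed

lemma ZDer_preimage: "ZDer preimage = w"
proof (rule nth_equalityI)
  show "length (ZDer preimage) = length w"
    using length_ZDer[OF preimage_perms] zder_wordsD(1)[OF zw] by simp
  fix k assume "k < length (ZDer preimage)"
  then have i: "1 \<le> Suc k" "Suc k \<le> n" using length_ZDer[OF preimage_perms] by auto
  have z: "ZDer preimage ! k = (if preimage_at (Suc k) = Suc k then 0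
      else rank_in (pos_positions w) (preimage_at (Suc k)))"
    using nth_ZDer_perm[OF preimage_perms i] nth_preimage[OF i] nonfixed_preimage by simp
  show "ZDer preimage ! k = w ! k"
  proof (cases "Suc k \<in> pos_positions w")
    case True
    then show ?thesis using z preimage_at_pos[OF True] preimage_at_moves[OF True] by simp
  next
    case False
    then have "w ! k = 0" using i zder_wordsD(1)[OF zw] unfolding pos_positions_def by auto
    then show ?thesis using z preimage_at_zero[OF i False] by simp
  qed
qed

end

lemma bij_betw_ZDer: "bij_betw ZDer (perms n) (zder_words n)"
  unfolding bij_betw_def
proof (intro conjI inj_on_ZDer equalityI subsetI)
  fix w assume w: "w \<in> zder_words n"
  show "w \<in> ZDer ` perms n"
    using ZDer_preimage[OF w] preimage_perms[OF w] by (metis image_eqI)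
qed (auto intro: ZDer_zder_words)

lemma ZDer_inv:
  assumes "w \<in> zder_words n"
  shows "ZDer_inv w \<in> perms n" and "ZDer (ZDer_inv w) = w"
proof -
  have "ZDer_inv w = inv_into (perms n) ZDer w" "w \<in> ZDer ` perms n"
    using assms bij_betw_ZDer[of n] by (simp_all add: ZDer_inv_def zder_wordsD(1) bij_betw_def)
  then show "ZDer_inv w \<in> perms n" "ZDer (ZDer_inv w) = w"
    by (simp_all add: inv_into_into f_inv_into_f)
qed

lemma bij_betw_ZDer_conj:
  assumes "bij_betw f (zder_words n) (zder_words n)"
  shows "bij_betw (\<lambda>\<sigma>. ZDer_inv (f (ZDer \<sigma>))) (perms n) (perms n)"
proof -
  have "bij_betw ZDer_inv (zder_words n) (perms n)"
    using bij_betw_inv_into[OF bij_betw_ZDer]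
    by (rule bij_betw_cong[THEN iffD1, rotated]) (simp add: ZDer_inv_def zder_wordsD(1))
  then show ?thesis
    using bij_betw_trans[OF bij_betw_trans[OF bij_betw_ZDer assms]] by (simp add: comp_def)
qed

lemma fixp_exc_ZDer_inv:
  assumes \<sigma>: "\<sigma> \<in> perms n" and v: "v \<in> zder_words n" and P: "Pos v = Pos (ZDer \<sigma>)"
  shows "fixp (ZDer_inv v) = fixp \<sigma> \<and> exc (ZDer_inv v) = exc \<sigma>"
proof
  have len: "length v = length (ZDer \<sigma>)" using v length_ZDer[OF \<sigma>] zder_wordsD(1) by simp
  have "fixp (ZDer_inv v) = num_zeros v"
    using fixp_eq_num_zeros[OF ZDer_inv(1)[OF v]] ZDer_inv(2)[OF v] by simp
  also have "\<dots> = num_zeros (ZDer \<sigma>)" by (rule num_zeros_eq_if_Pos_eq[OF len P])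
  finally show "fixp (ZDer_inv v) = fixp \<sigma>" by (simp add: fixp_eq_num_zeros[OF \<sigma>])
  have "exc (ZDer_inv v) = exc_word v"
    using exc_eq_exc_word[OF ZDer_inv(1)[OF v]] ZDer_inv(2)[OF v] by simp
  also have "\<dots> = exc_word (ZDer \<sigma>)" unfolding exc_word_Pos num_pos_def P ..
  finally show "exc (ZDer_inv v) = exc \<sigma>" by (simp add: exc_eq_exc_word[OF \<sigma>])
qed

lemma Phi_ZDer:
  assumes "\<sigma> \<in> perms n"
  shows "Phi \<sigma> \<in> perms n" and "ZDer (Phi \<sigma>) = PhiW (ZDer \<sigma>)"
  using ZDer_inv[OF PhiW_zder_words[OF ZDer_zder_words[OF assms]]] by (simp_all add: Phi_def)

lemma F3_ZDer:
  assumes "\<sigma> \<in> perms n"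
  shows "F3 \<sigma> \<in> perms n" and "ZDer (F3 \<sigma>) = F3W (ZDer \<sigma>)"
  using ZDer_inv[OF F3W_zder_words[OF ZDer_zder_words[OF assms]]] by (simp_all add: F3_def)

theorem mainTheorem5:
  fixes n :: nat
  shows "bij_betw Phi (perms n) (perms n) \<and> bij_betw F3 (perms n) (perms n) \<and>
    (\<forall>\<sigma>\<in>perms n.
       fixp \<sigma> = fixp (Phi \<sigma>) \<and> DEZ \<sigma> = DES (Phi \<sigma>) \<and> exc \<sigma> = exc (Phi \<sigma>) \<and>
       dez \<sigma> = des (Phi \<sigma>) \<and> maz \<sigma> = maj (Phi \<sigma>) \<and>
       fixp \<sigma> = fixp (F3 \<sigma>) \<and> int (maz \<sigma>) = maf (F3 \<sigma>) \<and> exc \<sigma> = exc (F3 \<sigma>))"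
proof (intro conjI ballI)
  show "bij_betw Phi (perms n) (perms n)"
    using bij_betw_ZDer_conj[OF bij_betw_PhiW] by (simp add: Phi_def[abs_def])
  show "bij_betw F3 (perms n) (perms n)"
    using bij_betw_ZDer_conj[OF bij_betw_F3W] by (simp add: F3_def[abs_def])
next
  fix \<sigma> assume \<sigma>: "\<sigma> \<in> perms n"
  note w = ZDer_zder_words[OF \<sigma>]
  have DEZ: "DEZ \<sigma> = DES (Phi \<sigma>)"
    using DES_eq_DES_level[OF Phi_ZDer(1)[OF \<sigma>]] Phi_ZDer(2)[OF \<sigma>] DES_level_PhiW[OF w]
    by (simp add: DEZ_def)
  then show "DEZ \<sigma> = DES (Phi \<sigma>)" "dez \<sigma> = des (Phi \<sigma>)" "maz \<sigma> = maj (Phi \<sigma>)"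
    by (simp_all add: dez_def des_def maz_def maj_def DEZ_def)
  show "fixp \<sigma> = fixp (Phi \<sigma>)" "exc \<sigma> = exc (Phi \<sigma>)"
    using fixp_exc_ZDer_inv[OF \<sigma> PhiW_zder_words[OF w] PhiW_Pos[OF w]] by (simp_all add: Phi_def)
  show "fixp \<sigma> = fixp (F3 \<sigma>)" "exc \<sigma> = exc (F3 \<sigma>)"
    using fixp_exc_ZDer_inv[OF \<sigma> F3W_zder_words[OF w]] F3W_length_Pos_last[of "ZDer \<sigma>"]
    by (simp_all add: F3_def)
  show "int (maz \<sigma>) = maf (F3 \<sigma>)"
    using pos_zero_inv_F3W[of "ZDer \<sigma>"] F3_ZDer(2)[OF \<sigma>] F3W_length_Pos_last[of "ZDer \<sigma>"]
    by (simp add: maf_def maz_def mafz_eq)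
qed

end
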